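(* Fix an integer $k\ge0$. Let $w$ be a weight, $f\in L^1_{loc}(\mathbb{R}^n)$, $Q$ a cube, $1<r<\infty$ and $1\le p<\infty$. Then \[ \left(\frac1{w_r(Q)}\int_Q\left(\frac{M_Q(f-P_Qf)(x)}{M_k^\sharp f(x)}\right)^pw(x)\,dx\right)^{1/p}\le c_n\,r'\,\gamma\,p, \] where $c_n$ depends only on $n$ and $\gamma$ is the constant (depending only on $n$ and $k$) in the estimate $|P_Rg(x)|\le\gamma\frac1{|R|}\int_R|g|$ valid for all cubes $R$, all $g\in L^1(R)$ and $x\in R$.
   Context: For a cube $R$, $P_R$ denotes the orthogonal projection, with respect to the inner product $\langle f,g\rangle_R=\frac1{|R|}\int_Rf\bar g$, onto the space of polynomials of degree at most $k$ restricted to $R$; i.e. $P_Rf=\sum_j\langle f,e_{j,R}\rangle_Re_{j,R}$ for an orthonormal basis $\{e_{j,R}\}$ of that space, obtained by translating and dilating a fixed orthonormal basis for $[0,1]^n$; this formula defines $P_R$ on all of $L^1(R)$, and there is $\gamma=\gamma(n,k)$ with $|P_Rg(x)|\le\gamma\frac1{|R|}\int_R|g|$. The polynomial sharp maximal function is $M_k^\sharp f(x)=\sup_{R\ni x}\frac1{|R|}\int_R|f-P_Rf|$ over cubes $R$ containing $x$. $w_r(Q)=|Q|\left(\frac1{|Q|}\int_Qw^r\right)^{1/r}$, $r'=r/(r-1)$. $M_Qh(x)=\sup_{R\in\mathcal D(Q),x\in R}\frac1{|R|}\int_R|h|$, where $\mathcal D(Q)$ is the set of dyadic descendants of $Q$.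 A weight is a non-negative locally integrable function. *)

theory Defs
  imports "HOL-Analysis.Analysis"
begin

text \<open>Power of an extended non-negative real by a positive real exponent
  (only used with positive exponents): top stays top.\<close>
definition epowr :: "ennreal \<Rightarrow> real \<Rightarrow> ennreal" where
  "epowr x q = (if x = top then top else ennreal (enn2real x powr q))"

definition cubes :: "(real ^ 'n) set set" where
  "cubes = {cbox a (a + h *\<^sub>R One) | a h. h > 0}"

definition dyadic_desc :: "(real ^ 'n) set \<Rightarrow> (real ^ 'n) set set" where
  "dyadic_desc Q = {cbox (a + (h / 2 ^ j) *\<^sub>R (\<chi> i. real (m i)))
                         (a + (h / 2 ^ j) *\<^sub>R (\<chi> i. real (m i) + 1))
                    | a h j m. h > 0 \<and> Q = cbox a (a + h *\<^sub>R One)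
                               \<and> (\<forall>i. m i < (2::nat) ^ j)}"

definition polys :: "nat \<Rightarrow> (real ^ 'n \<Rightarrow> complex) set" where
  "polys k = {p. \<exists>c :: ('n \<Rightarrow> nat) \<Rightarrow> complex.
     p = (\<lambda>x. \<Sum>\<alpha>\<in>{\<alpha>. sum \<alpha> UNIV \<le> k}. c \<alpha> * complex_of_real (\<Prod>i\<in>UNIV. (x $ i) ^ \<alpha> i))}"

text \<open>Orthogonal projection P_R f of f onto polys k, with respect to the inner product
  of L^2(R) (normalisation by |R| is irrelevant for orthogonality).  For f in L^1(R)
  this is the unique polynomial p of degree at most k with f - p orthogonal to all of them.\<close>
definition proj :: "nat \<Rightarrow> (real ^ 'n) set \<Rightarrow> (real ^ 'n \<Rightarrow> complex) \<Rightarrow> (real ^ 'n \<Rightarrow> complex)" where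
  "proj k R f = (THE p. p \<in> polys k \<and>
      (\<forall>q \<in> polys k. (LINT x:R|lborel. (f x - p x) * cnj (q x)) = 0))"

definition avg :: "(real ^ 'n) set \<Rightarrow> (real ^ 'n \<Rightarrow> complex) \<Rightarrow> ennreal" where
  "avg R g = (\<integral>\<^sup>+ y\<in>R. ennreal (norm (g y)) \<partial>lborel) / emeasure lborel R"

definition sharp_max :: "nat \<Rightarrow> (real ^ 'n \<Rightarrow> complex) \<Rightarrow> real ^ 'n \<Rightarrow> ennreal" where
  "sharp_max k f x = (SUP R \<in> {R \<in> cubes. x \<in> R}. avg R (\<lambda>y. f y - proj k R f y))"

definition dyadic_max :: "(real ^ 'n) set \<Rightarrow> (real ^ 'n \<Rightarrow> complex) \<Rightarrow> real ^ 'n \<Rightarrow> ennreal" where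
  "dyadic_max Q h x = (SUP R \<in> {R \<in> dyadic_desc Q. x \<in> R}. avg R h)"

definition w_r :: "real \<Rightarrow> (real ^ 'n \<Rightarrow> real) \<Rightarrow> (real ^ 'n) set \<Rightarrow> ennreal" where
  "w_r r w Q = emeasure lborel Q *
     epowr ((\<integral>\<^sup>+ x\<in>Q. ennreal (w x powr r) \<partial>lborel) / emeasure lborel Q) (1 / r)"

definition weight :: "(real ^ 'n \<Rightarrow> real) \<Rightarrow> bool" where
  "weight w \<longleftrightarrow> w \<in> borel_measurable lborel \<and> (\<forall>x. 0 \<le> w x) \<and>
     (\<forall>K. compact K \<longrightarrow> set_integrable lborel K w)"

definition loc_integrable :: "(real ^ 'n \<Rightarrow> complex) \<Rightarrow> bool" where
  "loc_integrable f \<longleftrightarrow> f \<in> borel_measurable lborel \<and>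
     (\<forall>K. compact K \<longrightarrow> set_integrable lborel K f)"

end

theory Submission
  imports Defs "HOL-Computational_Algebra.Polynomial"
begin

text \<open>Run a Calderon-Zygmund stopping time on the dyadic subcubes of \<open>Q\<close>: starting from \<open>Q\<close>,
  repeatedly select the maximal dyadic subcubes on which the mean oscillation of \<open>f\<close> about the
  projection of the parent exceeds twice that of the parent. Each generation fills at most half of
  the previous one, so the union \<open>G\<^sub>i\<close> of the \<open>i\<close>-th generation has measure at most \<open>2\<^sup>-\<^sup>i |Q|\<close>.
  Off \<open>G\<^sub>i\<^sub>+\<^sub>1\<close>, the bound \<open>|P\<^sub>R g| \<le> \<gamma> avg\<^sub>R |g|\<close> lets one telescope the projections along the
  chain of stopping ancestors, which gives \<open>M\<^sub>Q(f - P\<^sub>Q f) \<le> (2 + 2\<^sup>n\<^sup>+\<^sup>1 \<gamma> i) M\<^sup>#f\<close>. Hence the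
  \<open>p r'\<close>-th power of the ratio is dominated by \<open>\<Sum>\<^sub>i b\<^sub>i\<^sup>p\<^sup>r\<^sup>' 1\<^bsub>G\<^sub>i\<^esub>\<close>, whose integral is at most
  \<open>|Q| (c\<^sub>n \<gamma> p r')\<^sup>p\<^sup>r\<^sup>'\<close>, and Hoelder's inequality with exponents \<open>r'\<close> and \<open>r\<close> against \<open>w\<close>
  finishes the proof.\<close>

section \<open>Extended non-negative reals\<close>

lemma epowr_ennreal: "0 \<le> x \<Longrightarrow> epowr (ennreal x) s = ennreal (x powr s)"
  by (simp add: epowr_def)

lemma epowr_top [simp]: "epowr top s = top"
  by (simp add: epowr_def)

lemma epowr_0 [simp]: "epowr 0 s = 0"
  by (simp add: epowr_def)

lemma epowr_mono:
  assumes "x \<le> y" "0 \<le> s"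
  shows "epowr x s \<le> epowr y s"
proof (cases "y = top")
  case False
  then have "x \<noteq> top"
    using assms(1) top_unique by auto
  then have "enn2real x powr s \<le> enn2real y powr s"
    using assms False by (intro powr_mono2) (auto simp: enn2real_mono less_top)
  then show ?thesis
    using False \<open>x \<noteq> top\<close> by (simp add: epowr_def)
qed simp

lemma epowr_eq_0_iff: "0 < s \<Longrightarrow> epowr x s = 0 \<longleftrightarrow> x = 0"
  by (cases x) (auto simp: epowr_ennreal)

lemma epowr_epowr: "0 < s \<Longrightarrow> epowr (epowr x s) t = epowr x (s * t)"
  by (cases x) (auto simp: epowr_ennreal powr_powr)

lemma epowr_mult_top:
  assumes "x \<noteq> 0" "0 < s"
  shows "epowr x s * top = top"
  using assms by (simp add: epowr_eq_0_iff ennreal_mult_top)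

lemma borel_measurable_epowr [measurable (raw)]:
  assumes [measurable]: "u \<in> borel_measurable M"
  shows "(\<lambda>x. epowr (u x) s) \<in> borel_measurable M"
  unfolding epowr_def by measurable

lemma ennreal_divide_le_of_le_mult:
  fixes A c M :: ennreal
  assumes "A \<le> c * M"
  shows "A / M \<le> c"
proof (cases "M = 0")
  case False
  then show ?thesis
    using assms by (intro divide_le_posI_ennreal) (auto simp: mult.commute zero_less_iff_neq_zero)
qed (use assms in simp)

lemma suminf_eq_top_if_ge_1:
  fixes g :: "nat \<Rightarrow> ennreal"
  assumes "\<And>i. 1 \<le> g i"
  shows "suminf g = top"
proof -
  have "of_nat N \<le> suminf g" for N
  proof -
    have "of_nat N = (\<Sum>i<N. (1::ennreal))"
      by simp
    also have "\<dots> \<le> (\<Sum>i<N. g i)"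
      by (intro sum_mono assms)
    also have "\<dots> \<le> suminf g"
      by (rule sum_le_suminf) auto
    finally show ?thesis .
  qed
  then have "(SUP N. of_nat N :: ennreal) \<le> suminf g"
    by (rule SUP_least)
  then show ?thesis
    by (simp add: ennreal_SUP_of_nat_eq_top top_unique)
qed

lemma powr_mult_powr_normalised:
  fixes V W X \<alpha> \<beta> :: real
  assumes "0 < V" "0 < W" "0 \<le> X" "\<alpha> + \<beta> = 1"
  shows "(V * X) powr \<alpha> * W powr \<beta> / (V * (W / V) powr \<beta>) = X powr \<alpha>"
proof -
  have "V = V powr \<alpha> * V powr \<beta>"
    using assms by (simp add: powr_add[symmetric])
  then have "V * (W / V) powr \<beta> = V powr \<alpha> * W powr \<beta>"
    using assms by (simp add: powr_divide field_simps)
  moreover have "(V * X) powr \<alpha> = V powr \<alpha> * X powr \<alpha>"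
    using assms by (simp add: powr_mult)
  ultimately show ?thesis
    using assms by simp
qed

text \<open>With \<open>V = |Q|\<close> and \<open>W = \<integral>\<^sub>Q w\<^sup>r\<close>, the inverted factor is \<open>w\<^sub>r(Q)\<close>.\<close>
lemma inverse_normalised_mult_le:
  fixes V X :: real and W I :: ennreal
  assumes V: "0 < V" and X: "0 \<le> X" and "0 < \<beta>" "\<alpha> + \<beta> = 1"
    and I: "I \<le> epowr (ennreal (V * X)) \<alpha> * epowr W \<beta>"
  shows "inverse (ennreal V * epowr (W / ennreal V) \<beta>) * I \<le> ennreal (X powr \<alpha>)"
proof (cases "W = top")
  case True
  then have "ennreal V * epowr (W / ennreal V) \<beta> = top"
    using V by (simp add: ennreal_top_divide ennreal_mult_top)
  then show ?thesis
    by simp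
next
  case False
  show ?thesis
  proof (cases "W = 0")
    case True
    then show ?thesis
      using I \<open>0 < \<beta>\<close> by simp
  next
    case W0: False
    then obtain W' where W': "W = ennreal W'" "0 < W'"
      using False by (cases W) auto
    define D where "D = V * (W' / V) powr \<beta>"
    have D: "0 < D"
      using V W' by (simp add: D_def)
    have "ennreal V * epowr (W / ennreal V) \<beta> = ennreal D"
      using V W' by (simp add: D_def divide_ennreal epowr_ennreal ennreal_mult)
    then have inv: "inverse (ennreal V * epowr (W / ennreal V) \<beta>) = ennreal (1 / D)"
      using D by (simp add: inverse_ennreal inverse_eq_divide)
    have "epowr (ennreal (V * X)) \<alpha> = ennreal ((V * X) powr \<alpha>)"
      using V X by (intro epowr_ennreal) simp
    moreover have "epowr W \<beta> = ennreal (W' powr \<beta>)"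
      using W' by (simp add: epowr_ennreal)
    ultimately have "I \<le> ennreal ((V * X) powr \<alpha>) * ennreal (W' powr \<beta>)"
      using I by simp
    then have "I \<le> ennreal ((V * X) powr \<alpha> * W' powr \<beta>)"
      by (simp add: ennreal_mult)
    then have "inverse (ennreal V * epowr (W / ennreal V) \<beta>) * I
        \<le> ennreal (1 / D) * ennreal ((V * X) powr \<alpha> * W' powr \<beta>)"
      unfolding inv by (rule mult_left_mono) simp
    also have "\<dots> = ennreal ((V * X) powr \<alpha> * W' powr \<beta> / D)"
      using D by (simp flip: ennreal_mult)
    also have "(V * X) powr \<alpha> * W' powr \<beta> / D = X powr \<alpha>"
      unfolding D_def using assms W' by (intro powr_mult_powr_normalised) auto
    finally show ?thesis .
  qed
qed

section \<open>Hoelder's inequality for non-negative integrals\<close>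

lemma Young_inequality_scaled:
  fixes a b U V :: real
  assumes "0 \<le> a" "0 \<le> b" "0 < U" "0 < V" "0 \<le> \<alpha>" "0 \<le> \<beta>" "\<alpha> + \<beta> = 1"
  shows "a powr \<alpha> * b powr \<beta> \<le> U powr \<alpha> * V powr \<beta> * (\<alpha> * a / U + \<beta> * b / V)"
proof -
  have "(a / U) powr \<alpha> * (b / V) powr \<beta> \<le> \<alpha> * (a / U) + \<beta> * (b / V)"
  proof (cases "a = 0 \<or> b = 0")
    case False
    then show ?thesis
      using Youngs_inequality_0[of \<alpha> \<beta> "a / U" "b / V"] assms by auto
  qed (use assms in auto)
  then have "U powr \<alpha> * V powr \<beta> * ((a / U) powr \<alpha> * (b / V) powr \<beta>)
      \<le> U powr \<alpha> * V powr \<beta> * (\<alpha> * (a / U) + \<beta> * (b / V))"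
    by (intro mult_left_mono) auto
  then show ?thesis
    using assms by (simp add: powr_divide field_simps)
qed

lemma nn_integral_Holder_finite:
  fixes u :: "'a \<Rightarrow> ennreal" and v :: "'a \<Rightarrow> real"
  assumes [measurable]: "u \<in> borel_measurable M" "v \<in> borel_measurable M"
    and v_nonneg: "\<And>x. 0 \<le> v x" and "0 < \<alpha>" "0 < \<beta>" "\<alpha> + \<beta> = 1"
    and U: "(\<integral>\<^sup>+x. u x \<partial>M) = ennreal U" "0 < U"
    and V: "(\<integral>\<^sup>+x. ennreal (v x powr (1 / \<beta>)) \<partial>M) = ennreal V" "0 < V"
  shows "(\<integral>\<^sup>+x. epowr (u x) \<alpha> * ennreal (v x) \<partial>M) \<le> ennreal (U powr \<alpha> * V powr \<beta>)"
proof -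
  define C where "C = U powr \<alpha> * V powr \<beta>"
  have C: "0 \<le> C"
    by (simp add: C_def)
  have finite: "AE x in M. u x \<noteq> top"
    using nn_integral_PInf_AE[of u M] U by auto
  have "(\<integral>\<^sup>+x. epowr (u x) \<alpha> * ennreal (v x) \<partial>M)
      \<le> (\<integral>\<^sup>+x. ennreal (C * \<alpha> / U) * u x + ennreal (C * \<beta> / V) * ennreal (v x powr (1 / \<beta>)) \<partial>M)"
    using finite
  proof (intro nn_integral_mono_AE, eventually_elim)
    case (elim x)
    then obtain a where a: "u x = ennreal a" "0 \<le> a"
      by (cases "u x") auto
    have "(v x powr (1 / \<beta>)) powr \<beta> = v x"
      using v_nonneg[of x] \<open>0 < \<beta>\<close> by (simp add: powr_powr)
    then have "a powr \<alpha> * v x \<le> C * (\<alpha> * a / U + \<beta> * v x powr (1 / \<beta>) / V)"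
      unfolding C_def using Young_inequality_scaled[of a "v x powr (1 / \<beta>)" U V \<alpha> \<beta>] a assms U V
      by simp
    then show ?case
      using a v_nonneg[of x] assms U V C
      by (simp add: epowr_ennreal field_simps flip: ennreal_mult ennreal_plus)
  qed
  also have "\<dots> = ennreal (C * \<alpha> / U) * ennreal U + ennreal (C * \<beta> / V) * ennreal V"
    by (subst nn_integral_add) (auto simp: nn_integral_cmult U V)
  also have "\<dots> = ennreal (C * \<alpha> / U * U + C * \<beta> / V * V)"
    using U V C assms by (simp flip: ennreal_mult ennreal_plus)
  also have "C * \<alpha> / U * U + C * \<beta> / V * V = C"
    using U V \<open>\<alpha> + \<beta> = 1\<close> by (simp flip: distrib_left)
  finally show ?thesis
    by (simp add: C_def)
qed

lemma nn_integral_Holder: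
  fixes u :: "'a \<Rightarrow> ennreal" and v :: "'a \<Rightarrow> real"
  assumes [measurable]: "u \<in> borel_measurable M" "v \<in> borel_measurable M"
    and v_nonneg: "\<And>x. 0 \<le> v x" and "0 < \<alpha>" "0 < \<beta>" "\<alpha> + \<beta> = 1"
  shows "(\<integral>\<^sup>+x. epowr (u x) \<alpha> * ennreal (v x) \<partial>M)
     \<le> epowr (\<integral>\<^sup>+x. u x \<partial>M) \<alpha> * epowr (\<integral>\<^sup>+x. ennreal (v x powr (1 / \<beta>)) \<partial>M) \<beta>"
    (is "?I \<le> epowr ?U \<alpha> * epowr ?V \<beta>")
proof (cases "?U = 0 \<or> ?V = 0")
  case True
  have "AE x in M. u x = 0 \<or> v x = 0"
  proof (cases "?U = 0")
    case False
    then have "AE x in M. ennreal (v x powr (1 / \<beta>)) = 0"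
      using True by (simp add: nn_integral_0_iff_AE)
    then show ?thesis
      by eventually_elim (use v_nonneg in \<open>auto simp: ennreal_eq_0_iff\<close>)
  qed (auto simp: nn_integral_0_iff_AE elim: AE_mp)
  then have "?I = 0"
    by (subst nn_integral_0_iff_AE) (auto elim!: AE_mp)
  then show ?thesis
    by simp
next
  case nonzero: False
  show ?thesis
  proof (cases "?U = top \<or> ?V = top")
    case True
    then show ?thesis
      using nonzero assms by (auto simp: epowr_eq_0_iff epowr_mult_top mult.commute[of _ top])
  next
    case False
    then obtain U V where "?U = ennreal U" "0 < U" "?V = ennreal V" "0 < V"
      using nonzero by (cases ?U; cases ?V) (auto simp: ennreal_eq_0_iff)
    then show ?thesis
      using nn_integral_Holder_finite[OF assms] by (simp add: epowr_ennreal ennreal_mult)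
  qed
qed

section \<open>A series estimate\<close>

lemma exp_quarter_le: "exp (1/4::real) \<le> 3/2"
proof (rule ccontr)
  assume "\<not> exp (1/4::real) \<le> 3/2"
  then have "(3/2::real) ^ 4 < exp (1/4) ^ 4"
    by (intro power_strict_mono) auto
  also have "\<dots> = exp 1"
    by (simp flip: exp_of_nat_mult)
  also have "\<dots> < 272/100"
    by (rule e_less_272)
  finally show False
    by (simp add: power4_eq_xxxx)
qed

lemma powr_le_geometric:
  fixes q :: real and m :: nat
  assumes "1 \<le> q" "1 \<le> m"
  shows "real m powr q \<le> (4 * q) powr q * (3/2) ^ m"
proof -
  define x where "x = real m / (4 * q)"
  have x: "0 < x"
    using assms by (simp add: x_def)
  \<comment> \<open>\<open>x \<le> e\<^sup>x\<^sup>-\<^sup>1\<close> with \<open>x = m / 4q\<close>\<close>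
  have "x powr q \<le> exp (x - 1) powr q"
    using x assms exp_ge_add_one_self[of "x - 1"] by (intro powr_mono2) auto
  also have "\<dots> = exp (real m * (1/4) - q)"
    using assms by (simp add: powr_def x_def field_simps)
  also have "\<dots> \<le> exp (1/4) ^ m"
    using assms by (simp flip: exp_of_nat_mult)
  also have "\<dots> \<le> (3/2) ^ m"
    using exp_quarter_le by (intro power_mono) auto
  finally have "x powr q \<le> (3/2) ^ m" .
  moreover have "real m powr q = (4 * q) powr q * x powr q"
    using assms by (simp add: x_def powr_divide)
  ultimately show ?thesis
    by (simp add: mult_left_mono)
qed

lemma suminf_powr_linear_half_power_le:
  fixes q K :: real and b :: "nat \<Rightarrow> real"
  assumes q: "1 \<le> q" and K: "0 \<le> K" and b: "\<And>i. 0 \<le> b i" "\<And>i. b i \<le> K * real (Suc i)"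
  shows "(\<Sum>i. ennreal (b i powr q * (1/2) ^ i)) \<le> ennreal ((24 * K * q) powr q)"
proof -
  define A where "A = K powr q * (4 * q) powr q * (3/2)"
  have term_le: "b i powr q * (1/2) ^ i \<le> A * (3/4) ^ i" for i
  proof -
    have "b i powr q \<le> K powr q * real (Suc i) powr q"
      using b K q powr_mono2[of q "b i" "K * real (Suc i)"] by (simp add: powr_mult)
    also have "\<dots> \<le> K powr q * ((4 * q) powr q * (3/2) ^ Suc i)"
      using powr_le_geometric[OF q, of "Suc i"] by (intro mult_left_mono) auto
    finally have "b i powr q * (1/2) ^ i \<le> K powr q * ((4 * q) powr q * (3/2) ^ Suc i) * (1/2) ^ i"
      by (intro mult_right_mono) auto
    also have "\<dots> = A * ((3/2) ^ i * (1/2) ^ i)"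
      by (simp add: A_def ac_simps)
    finally show ?thesis
      by (simp add: power_mult_distrib[symmetric])
  qed
  have "A * 4 = 6 * (K powr q * (4 * q) powr q)"
    by (simp add: A_def)
  also have "\<dots> \<le> 6 powr q * (K powr q * (4 * q) powr q)"
    using powr_mono[of 1 q 6] q by (intro mult_right_mono) auto
  also have "\<dots> = (24 * K * q) powr q"
    using K q by (simp add: powr_mult[symmetric] mult.assoc)
  finally have A: "A * 4 \<le> (24 * K * q) powr q" .
  have "(\<Sum>i. ennreal (b i powr q * (1/2) ^ i)) \<le> (\<Sum>i. ennreal (A * (3/4) ^ i))"
    by (intro suminf_le summableI ennreal_leI term_le)
  also have "\<dots> = ennreal (A * 4)"
    using sums_mult[OF geometric_sums[of "3/4::real"], of A]
    by (intro suminf_ennreal_eq) (auto simp: A_def)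
  also have "\<dots> \<le> ennreal ((24 * K * q) powr q)"
    using A by (rule ennreal_leI)
  finally show ?thesis .
qed

section \<open>Polynomials of bounded degree\<close>

definition monomial :: "('n::finite \<Rightarrow> nat) \<Rightarrow> real ^ 'n \<Rightarrow> complex" where
  "monomial \<alpha> x = complex_of_real (\<Prod>i\<in>UNIV. (x $ i) ^ \<alpha> i)"

definition multi_indices :: "nat \<Rightarrow> ('n::finite \<Rightarrow> nat) set" where
  "multi_indices k = {\<alpha>. sum \<alpha> UNIV \<le> k}"

lemma finite_multi_indices: "finite (multi_indices k :: ('n::finite \<Rightarrow> nat) set)"
proof (rule finite_subset)
  show "multi_indices k \<subseteq> PiE UNIV (\<lambda>_::'n. {..k})"
  proof
    fix \<alpha> :: "'n \<Rightarrow> nat"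
    assume "\<alpha> \<in> multi_indices k"
    then have "\<alpha> i \<le> k" for i
      using member_le_sum[of i UNIV \<alpha>] by (simp add: multi_indices_def)
    then show "\<alpha> \<in> PiE UNIV (\<lambda>_. {..k})"
      by (auto simp: PiE_iff)
  qed
qed (intro finite_PiE, auto)

lemma polys_iff: "p \<in> polys k \<longleftrightarrow> (\<exists>c. p = (\<lambda>x. \<Sum>\<alpha>\<in>multi_indices k. c \<alpha> * monomial \<alpha> x))"
  unfolding polys_def multi_indices_def monomial_def by auto

lemma polysI: "p = (\<lambda>x. \<Sum>\<alpha>\<in>multi_indices k. c \<alpha> * monomial \<alpha> x) \<Longrightarrow> p \<in> polys k"
  using polys_iff by blast

lemma polys_diff:
  assumes "p \<in> polys k" "q \<in> polys k"
  shows "(\<lambda>x. p x - q x) \<in> polys k"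
proof -
  obtain c d where "p = (\<lambda>x. \<Sum>\<alpha>\<in>multi_indices k. c \<alpha> * monomial \<alpha> x)"
    "q = (\<lambda>x. \<Sum>\<alpha>\<in>multi_indices k. d \<alpha> * monomial \<alpha> x)"
    using assms unfolding polys_iff by blast
  then show ?thesis
    by (intro polysI[where c="\<lambda>\<alpha>. c \<alpha> - d \<alpha>"]) (auto simp: sum_subtractf algebra_simps)
qed

lemma polys_const: "(\<lambda>x :: real ^ 'n::finite. a) \<in> polys k"
proof (rule polysI[where c="\<lambda>\<alpha>. if \<alpha> = (\<lambda>_. 0) then a else 0"])
  have if_mult: "(if \<alpha> = (\<lambda>_. 0) then a else 0) * monomial \<alpha> x
      = (if \<alpha> = (\<lambda>_. 0) then a * monomial \<alpha> x else 0)" for \<alpha> x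
    by simp
  show "(\<lambda>x. a) = (\<lambda>x. \<Sum>\<alpha>\<in>multi_indices k. (if \<alpha> = (\<lambda>_. 0) then a else 0) * monomial \<alpha> x)"
    by (simp only: if_mult sum.delta finite_multi_indices) (simp add: multi_indices_def monomial_def)
qed

lemma continuous_on_monomial: "continuous_on S (monomial \<alpha>)"
  unfolding monomial_def by (intro continuous_intros)

lemma continuous_on_polys: "p \<in> polys k \<Longrightarrow> continuous_on S p"
  unfolding polys_iff
  by (auto intro!: continuous_intros continuous_on_monomial[THEN continuous_on_compose2[of UNIV]])

lemma borel_measurable_polys: "p \<in> polys k \<Longrightarrow> p \<in> borel_measurable borel"
  by (rule borel_measurable_continuous_onI) (rule continuous_on_polys)

lemma poly_eq_0_if_roots_on_interval:
  fixes P :: "complex poly"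
  assumes "0 < e" "\<And>t. 0 < t \<Longrightarrow> t < e \<Longrightarrow> poly P (complex_of_real t) = 0"
  shows "P = 0"
proof (rule ccontr)
  assume "P \<noteq> 0"
  have "complex_of_real ` {0<..<e} \<subseteq> {z. poly P z = 0}"
    using assms(2) by auto
  moreover have "infinite (complex_of_real ` {0<..<e})"
    using assms(1) by (subst finite_image_iff) (auto simp: inj_on_def)
  ultimately show False
    using poly_roots_finite[OF \<open>P \<noteq> 0\<close>] finite_subset by blast
qed

text \<open>Restricted to the line through \<open>x\<^sub>0\<close> and \<open>y\<close>, \<open>p\<close> is a univariate polynomial.\<close>
lemma polys_eq_0_if_eq_0_on_ball:
  assumes "p \<in> polys k" "0 < e" "\<And>x. x \<in> ball x0 e \<Longrightarrow> p x = 0"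
  shows "p y = 0"
proof -
  obtain c where p: "p = (\<lambda>x. \<Sum>\<alpha>\<in>multi_indices k. c \<alpha> * monomial \<alpha> x)"
    using assms(1) unfolding polys_iff by blast
  define d where "d = y - x0"
  define P where "P = (\<Sum>\<alpha>\<in>multi_indices k. smult (c \<alpha>)
     (\<Prod>i\<in>UNIV. [:complex_of_real (x0$i), complex_of_real (d$i):] ^ \<alpha> i))"
  have P_eval: "poly P (complex_of_real t) = p (x0 + t *\<^sub>R d)" for t
    by (simp add: P_def p poly_sum poly_prod monomial_def algebra_simps)
  have nd: "0 < norm d + 1"
    using norm_ge_zero[of d] by linarith
  have "P = 0"
  proof (rule poly_eq_0_if_roots_on_interval)
    show "0 < e / (norm d + 1)"
      using assms(2) nd by (rule divide_pos_pos)
    fix t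
    assume t: "0 < t" "t < e / (norm d + 1)"
    have "norm d * t \<le> (norm d + 1) * t"
      using t by (intro mult_right_mono) auto
    also have "\<dots> < e"
      using t nd by (simp add: field_simps)
    finally have "x0 + t *\<^sub>R d \<in> ball x0 e"
      using t by (simp add: dist_norm mult.commute)
    then show "poly P (complex_of_real t) = 0"
      using assms(3) P_eval by simp
  qed
  then show ?thesis
    using P_eval[of 1] by (simp add: d_def)
qed

section \<open>The complex \<open>L\<^sup>2\<close> inner product on a finite measure\<close>

definition l2_inner :: "'a measure \<Rightarrow> ('a \<Rightarrow> complex) \<Rightarrow> ('a \<Rightarrow> complex) \<Rightarrow> complex" where
  "l2_inner M u v = (\<integral>x. u x * cnj (v x) \<partial>M)"

definition bounded_measurable :: "'a measure \<Rightarrow> ('a \<Rightarrow> complex) \<Rightarrow> bool" where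
  "bounded_measurable M v \<longleftrightarrow> v \<in> borel_measurable M \<and> (\<exists>B. \<forall>x\<in>space M. norm (v x) \<le> B)"

lemma borel_measurable_cnj [measurable]:
  "v \<in> borel_measurable M \<Longrightarrow> (\<lambda>x. cnj (v x)) \<in> borel_measurable M"
  by (erule measurable_compose[OF _ borel_measurable_continuous_onI]) (intro continuous_intros)

lemma integrable_mult_cnj:
  assumes u: "integrable M u" and v: "bounded_measurable M v"
  shows "integrable M (\<lambda>x. u x * cnj (v x))"
proof -
  obtain B where B: "\<And>x. x \<in> space M \<Longrightarrow> norm (v x) \<le> B" and [measurable]: "v \<in> borel_measurable M"
    using v unfolding bounded_measurable_def by blast
  have ae: "AE x in M. norm (u x * cnj (v x)) \<le> norm (B * norm (u x))"
  proof (rule AE_I2)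
    fix x
    assume "x \<in> space M"
    then have "norm (u x * cnj (v x)) \<le> norm (u x) * B"
      using B by (simp add: norm_mult mult_left_mono)
    then show "norm (u x * cnj (v x)) \<le> norm (B * norm (u x))"
      by (simp add: mult.commute)
  qed
  have meas: "(\<lambda>x. u x * cnj (v x)) \<in> borel_measurable M"
    using u by measurable
  have "integrable M (\<lambda>x. B * norm (u x))"
    using u by auto
  from Bochner_Integration.integrable_bound[OF this meas ae] show ?thesis .
qed

lemma bounded_measurable_integrable:
  "finite_measure M \<Longrightarrow> bounded_measurable M v \<Longrightarrow> integrable M v"
  unfolding bounded_measurable_def by (auto intro: finite_measure.integrable_const_bound)

lemma bounded_measurable_diff:
  assumes "bounded_measurable M u" "bounded_measurable M v"
  shows "bounded_measurable M (\<lambda>x. u x - v x)"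
proof -
  obtain A B where "\<forall>x\<in>space M. norm (u x) \<le> A" "\<forall>x\<in>space M. norm (v x) \<le> B"
    "u \<in> borel_measurable M" "v \<in> borel_measurable M"
    using assms unfolding bounded_measurable_def by blast
  then show ?thesis
    unfolding bounded_measurable_def
    by (intro conjI exI[of _ "A + B"]) (auto intro!: norm_triangle_ineq4[THEN order_trans] add_mono)
qed

lemma bounded_measurable_cmult:
  assumes "bounded_measurable M u"
  shows "bounded_measurable M (\<lambda>x. a * u x)"
proof -
  obtain A where "\<forall>x\<in>space M. norm (u x) \<le> A" "u \<in> borel_measurable M"
    using assms unfolding bounded_measurable_def by blast
  then show ?thesis
    unfolding bounded_measurable_def
    by (intro conjI exI[of _ "norm a * A"]) (auto simp: norm_mult intro!: mult_left_mono)
qed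

lemma bounded_measurable_sum:
  "finite S \<Longrightarrow> (\<And>\<alpha>. \<alpha> \<in> S \<Longrightarrow> bounded_measurable M (m \<alpha>)) \<Longrightarrow>
    bounded_measurable M (\<lambda>x. \<Sum>\<alpha>\<in>S. c \<alpha> * m \<alpha> x)"
proof (induction S rule: finite_induct)
  case (insert b S)
  then have "bounded_measurable M (\<lambda>x. c b * m b x - (-1) * (\<Sum>\<alpha>\<in>S. c \<alpha> * m \<alpha> x))"
    by (intro bounded_measurable_diff bounded_measurable_cmult) auto
  then show ?case
    using insert by simp
qed (auto simp: bounded_measurable_def)

lemma l2_inner_diff_left:
  "integrable M u \<Longrightarrow> integrable M v \<Longrightarrow> bounded_measurable M w \<Longrightarrow>
    l2_inner M (\<lambda>x. u x - v x) w = l2_inner M u w - l2_inner M v w"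
  unfolding l2_inner_def by (simp add: left_diff_distrib integrable_mult_cnj)

lemma l2_inner_add_right:
  "integrable M u \<Longrightarrow> bounded_measurable M v \<Longrightarrow> bounded_measurable M w \<Longrightarrow>
    l2_inner M u (\<lambda>x. v x + w x) = l2_inner M u v + l2_inner M u w"
  unfolding l2_inner_def by (simp add: distrib_left integrable_mult_cnj)

lemma l2_inner_cmult_left: "l2_inner M (\<lambda>x. a * u x) w = a * l2_inner M u w"
  unfolding l2_inner_def by (simp add: mult.assoc)

lemma l2_inner_sum_right:
  assumes "finite S" "integrable M u" "\<And>\<alpha>. \<alpha> \<in> S \<Longrightarrow> bounded_measurable M (m \<alpha>)"
  shows "l2_inner M u (\<lambda>x. \<Sum>\<alpha>\<in>S. c \<alpha> * m \<alpha> x) = (\<Sum>\<alpha>\<in>S. cnj (c \<alpha>) * l2_inner M u (m \<alpha>))"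
proof -
  have "l2_inner M u (\<lambda>x. \<Sum>\<alpha>\<in>S. c \<alpha> * m \<alpha> x) = (\<integral>x. (\<Sum>\<alpha>\<in>S. cnj (c \<alpha>) * (u x * cnj (m \<alpha> x))) \<partial>M)"
    unfolding l2_inner_def by (simp add: sum_distrib_left algebra_simps)
  also have "\<dots> = (\<Sum>\<alpha>\<in>S. cnj (c \<alpha>) * l2_inner M u (m \<alpha>))"
    unfolding l2_inner_def using integrable_mult_cnj[OF assms(2,3)]
    by (subst Bochner_Integration.integral_sum) (auto intro!: sum.cong)
  finally show ?thesis .
qed

lemma l2_inner_self_eq_0_AE:
  assumes "bounded_measurable M u" "finite_measure M" "l2_inner M u u = 0"
  shows "AE x in M. u x = 0"
proof -
  have sq: "u x * cnj (u x) = complex_of_real ((norm (u x))\<^sup>2)" for x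
    by (metis complex_norm_square of_real_power)
  have "integrable M (\<lambda>x. Re (u x * cnj (u x)))"
    using assms by (intro integrable_Re integrable_mult_cnj bounded_measurable_integrable)
  then have "integrable M (\<lambda>x. (norm (u x))\<^sup>2)"
    by (simp add: sq)
  moreover have "integral\<^sup>L M (\<lambda>x. (norm (u x))\<^sup>2) = 0"
    using assms(3) unfolding l2_inner_def sq integral_complex_of_real by simp
  ultimately have "AE x in M. (norm (u x))\<^sup>2 = 0"
    by (subst integral_nonneg_eq_0_iff_AE[symmetric]) auto
  then show ?thesis
    by auto
qed

lemma l2_inner_AE_0_right: "AE x in M. u x = 0 \<Longrightarrow> l2_inner M v u = 0"
  unfolding l2_inner_def by (subst integral_eq_zero_AE) (auto elim: AE_mp)

lemma l2_inner_orthogonalise: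
  assumes M: "finite_measure M" and r: "integrable M r" and u: "bounded_measurable M u"
  shows "\<exists>t. l2_inner M (\<lambda>x. r x - t * u x) u = 0"
proof (cases "l2_inner M u u = 0")
  case True
  then show ?thesis
    using l2_inner_AE_0_right[OF l2_inner_self_eq_0_AE[OF u M]] by blast
next
  case False
  let ?t = "l2_inner M r u / l2_inner M u u"
  have "l2_inner M (\<lambda>x. r x - ?t * u x) u = 0"
    using False l2_inner_diff_left[OF r _ u, of "\<lambda>x. ?t * u x"] bounded_measurable_integrable[OF M u]
      l2_inner_cmult_left[of M ?t u u]
    by simp
  then show ?thesis
    by blast
qed

text \<open>The functions \<open>m \<alpha>\<close> need not be linearly independent: the induction step removes from
  the remainder of \<open>g\<close> its component along the remainder \<open>u\<close> of the new function, which may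
  vanish.\<close>
lemma orthogonal_remainder_exists:
  assumes M: "finite_measure M" and S: "finite S"
    and m: "\<And>\<alpha>. \<alpha> \<in> S \<Longrightarrow> bounded_measurable M (m \<alpha>)" and g: "integrable M g"
  shows "\<exists>c. \<forall>\<beta>\<in>S. l2_inner M (\<lambda>x. g x - (\<Sum>\<alpha>\<in>S. c \<alpha> * m \<alpha> x)) (m \<beta>) = 0"
  using S m g
proof (induction S arbitrary: g rule: finite_induct)
  case (insert b S)
  have mS: "\<And>\<alpha>. \<alpha> \<in> S \<Longrightarrow> bounded_measurable M (m \<alpha>)" and mb: "bounded_measurable M (m b)"
    using insert by auto
  obtain c1 where c1: "\<forall>\<beta>\<in>S. l2_inner M (\<lambda>x. g x - (\<Sum>\<alpha>\<in>S. c1 \<alpha> * m \<alpha> x)) (m \<beta>) = 0"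
    using insert.IH[OF mS insert.prems(2)] by blast
  obtain c2 where c2: "\<forall>\<beta>\<in>S. l2_inner M (\<lambda>x. m b x - (\<Sum>\<alpha>\<in>S. c2 \<alpha> * m \<alpha> x)) (m \<beta>) = 0"
    using insert.IH[OF mS bounded_measurable_integrable[OF M mb]] by blast
  define r where "r = (\<lambda>x. g x - (\<Sum>\<alpha>\<in>S. c1 \<alpha> * m \<alpha> x))"
  define q where "q = (\<lambda>x. \<Sum>\<alpha>\<in>S. c2 \<alpha> * m \<alpha> x)"
  define u where "u = (\<lambda>x. m b x - q x)"
  have q: "bounded_measurable M q"
    unfolding q_def using bounded_measurable_sum[OF insert(1) mS] .
  have u: "bounded_measurable M u"
    unfolding u_def using bounded_measurable_diff[OF mb q] .
  have ir: "integrable M r"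
    unfolding r_def using insert.prems(2) bounded_measurable_integrable[OF M bounded_measurable_sum[OF insert(1) mS]]
    by auto
  have iu: "integrable M u"
    using bounded_measurable_integrable[OF M u] .
  have rS: "\<forall>\<beta>\<in>S. l2_inner M r (m \<beta>) = 0" and uS: "\<forall>\<beta>\<in>S. l2_inner M u (m \<beta>) = 0"
    using c1 c2 by (simp_all add: r_def u_def q_def)
  have orth_q: "l2_inner M v q = 0" if "integrable M v" "\<forall>\<beta>\<in>S. l2_inner M v (m \<beta>) = 0" for v
    unfolding q_def using that by (subst l2_inner_sum_right[OF insert(1) _ mS]) auto
  have mb_eq: "m b = (\<lambda>x. q x + u x)"
    unfolding u_def by auto
  obtain t where ru: "l2_inner M (\<lambda>x. r x - t * u x) u = 0"
    using l2_inner_orthogonalise[OF M ir u] by blast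
  have res_int: "integrable M (\<lambda>x. r x - t * u x)"
    using ir iu by auto
  have resS: "\<forall>\<beta>\<in>S. l2_inner M (\<lambda>x. r x - t * u x) (m \<beta>) = 0"
    using rS uS l2_inner_diff_left[OF ir _ mS, of "\<lambda>x. t * u x"] iu l2_inner_cmult_left[of M t u]
    by simp
  have resb: "l2_inner M (\<lambda>x. r x - t * u x) (m b) = 0"
    unfolding mb_eq using ru orth_q[OF res_int resS]
    by (subst l2_inner_add_right[OF res_int q u]) simp
  define c where "c = (\<lambda>\<alpha>. if \<alpha> = b then t else c1 \<alpha> - t * c2 \<alpha>)"
  have "(\<Sum>\<alpha>\<in>insert b S. c \<alpha> * m \<alpha> x) = t * m b x + (\<Sum>\<alpha>\<in>S. (c1 \<alpha> - t * c2 \<alpha>) * m \<alpha> x)" for x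
    unfolding c_def using insert(1,2) by (auto intro!: sum.cong)
  also have "\<dots> x = (\<Sum>\<alpha>\<in>S. c1 \<alpha> * m \<alpha> x) + t * u x" for x
    unfolding u_def q_def by (simp add: algebra_simps sum_subtractf sum_distrib_left)
  finally have "(\<lambda>x. g x - (\<Sum>\<alpha>\<in>insert b S. c \<alpha> * m \<alpha> x)) = (\<lambda>x. r x - t * u x)"
    unfolding r_def by auto
  then show ?case
    using resS resb by (intro exI[of _ c]) auto
qed simp

section \<open>Projection onto polynomials\<close>

lemma bounded_measurable_restrict_compact:
  assumes "continuous_on UNIV f" "compact R"
  shows "bounded_measurable (restrict_space lborel R) f"
proof -
  have "f \<in> borel_measurable (restrict_space lborel R)"
    using borel_measurable_continuous_onI[OF assms(1)] by (intro measurable_restrict_space1) simp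
  moreover obtain B where "\<forall>y\<in>f ` R. norm y \<le> B"
    using assms compact_continuous_image[of R f] continuous_on_subset compact_imp_bounded bounded_iff
    by (metis subset_UNIV)
  ultimately show ?thesis
    unfolding bounded_measurable_def by (auto simp: space_restrict_space)
qed

lemma finite_measure_restrict_compact:
  assumes "compact R"
  shows "finite_measure (restrict_space lborel R)"
proof (rule finite_measureI)
  have "emeasure (restrict_space lborel R) R = emeasure lborel R"
    using assms by (subst emeasure_restrict_space) (auto simp: borel_compact)
  then show "emeasure (restrict_space lborel R) (space (restrict_space lborel R)) \<noteq> \<infinity>"
    using emeasure_compact_finite[OF assms] by (simp add: space_restrict_space)
qed

lemma set_lebesgue_integral_restrict_compact:
  fixes F :: "_ \<Rightarrow> complex"
  shows "compact R \<Longrightarrow> (LINT x:R|lborel. F x) = integral\<^sup>L (restrict_space lborel R) F"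
  unfolding set_lebesgue_integral_def by (subst integral_restrict_space) (auto simp: borel_compact)

lemma set_integrable_iff_restrict_compact:
  fixes g :: "_ \<Rightarrow> complex"
  shows "compact R \<Longrightarrow> set_integrable lborel R g \<longleftrightarrow> integrable (restrict_space lborel R) g"
  unfolding set_integrable_def by (subst integrable_restrict_space) (auto simp: borel_compact)

lemma set_integrable_polys: "p \<in> polys k \<Longrightarrow> compact R \<Longrightarrow> set_integrable lborel R p"
  using bounded_measurable_integrable[OF finite_measure_restrict_compact
      bounded_measurable_restrict_compact[OF continuous_on_polys]]
  by (simp add: set_integrable_iff_restrict_compact)

definition is_proj :: "nat \<Rightarrow> (real ^ 'n::finite) set \<Rightarrow> (real ^ 'n \<Rightarrow> complex) \<Rightarrow> (real ^ 'n \<Rightarrow> complex) \<Rightarrow> bool" where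
  "is_proj k R g p \<longleftrightarrow> p \<in> polys k \<and> (\<forall>q \<in> polys k. (LINT x:R|lborel. (g x - p x) * cnj (q x)) = 0)"

lemma is_proj_exists:
  assumes R: "compact R" and g: "set_integrable lborel R g"
  shows "\<exists>p. is_proj k R g p"
proof -
  let ?M = "restrict_space lborel R"
  have M: "finite_measure ?M"
    using R by (rule finite_measure_restrict_compact)
  have gi: "integrable ?M g"
    using g R set_integrable_iff_restrict_compact by blast
  have mB: "bounded_measurable ?M (monomial \<alpha>)" for \<alpha>
    using R by (intro bounded_measurable_restrict_compact continuous_on_monomial)
  obtain c where c: "\<forall>\<beta>\<in>multi_indices k.
      l2_inner ?M (\<lambda>x. g x - (\<Sum>\<alpha>\<in>multi_indices k. c \<alpha> * monomial \<alpha> x)) (monomial \<beta>) = 0"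
    using orthogonal_remainder_exists[OF M finite_multi_indices, where m=monomial, OF mB gi] by blast
  define p where "p = (\<lambda>x. \<Sum>\<alpha>\<in>multi_indices k. c \<alpha> * monomial \<alpha> x)"
  have p: "p \<in> polys k"
    unfolding p_def by (rule polysI) simp
  have ri: "integrable ?M (\<lambda>x. g x - p x)"
    using gi bounded_measurable_integrable[OF M bounded_measurable_restrict_compact[OF continuous_on_polys[OF p] R]]
    by auto
  have "(LINT x:R|lborel. (g x - p x) * cnj (q x)) = 0" if q: "q \<in> polys k" for q
  proof -
    obtain d where d: "q = (\<lambda>x. \<Sum>\<alpha>\<in>multi_indices k. d \<alpha> * monomial \<alpha> x)"
      using q polys_iff by blast
    have "(LINT x:R|lborel. (g x - p x) * cnj (q x)) = l2_inner ?M (\<lambda>x. g x - p x) q"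
      unfolding l2_inner_def using R by (rule set_lebesgue_integral_restrict_compact)
    also have "\<dots> = (\<Sum>\<alpha>\<in>multi_indices k. cnj (d \<alpha>) * l2_inner ?M (\<lambda>x. g x - p x) (monomial \<alpha>))"
      unfolding d by (rule l2_inner_sum_right[OF finite_multi_indices ri mB])
    also have "\<dots> = 0"
      using c unfolding p_def by simp
    finally show ?thesis .
  qed
  then show ?thesis
    using p unfolding is_proj_def by blast
qed

lemma polys_eq_0_if_AE_eq_0:
  assumes p: "p \<in> polys k" and R: "interior R \<noteq> {}" and AE: "AE x in lborel. x \<in> R \<longrightarrow> p x = 0"
  shows "p y = 0"
proof -
  obtain N where N: "N \<in> null_sets lborel" "{x. \<not> (x \<in> R \<longrightarrow> p x = 0)} \<subseteq> N"
    using AE by (auto elim!: AE_E simp: null_sets_def)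
  define U where "U = interior R \<inter> {x. p x \<noteq> 0}"
  have "open U"
    unfolding U_def using continuous_on_polys[OF p]
    by (intro open_Int open_interior) (auto intro: open_Collect_neq continuous_on_const)
  moreover have "negligible U"
  proof (rule negligible_subset)
    show "negligible N"
      using N(1) by (simp add: negligible_iff_null_sets null_sets_completionI)
    show "U \<subseteq> N"
      using N(2) interior_subset[of R] unfolding U_def by auto
  qed
  ultimately have "U = {}"
    using open_not_negligible by blast
  obtain x0 e where e: "0 < e" "ball x0 e \<subseteq> interior R"
    using R open_contains_ball open_interior by blast
  have "p x = 0" if "x \<in> ball x0 e" for x
    using that e(2) \<open>U = {}\<close> unfolding U_def by blast
  then show ?thesis
    by (rule polys_eq_0_if_eq_0_on_ball[OF p e(1)])
qed

text \<open>Two projections differ by a polynomial orthogonal to itself, hence vanishing almost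
  everywhere on \<open>R\<close>.\<close>
lemma is_proj_unique:
  assumes R: "compact R" "interior R \<noteq> {}" and g: "set_integrable lborel R g"
    and p1: "is_proj k R g p1" and p2: "is_proj k R g p2"
  shows "p1 = p2"
proof -
  let ?M = "restrict_space lborel R"
  have M: "finite_measure ?M"
    using R by (intro finite_measure_restrict_compact)
  have gi: "integrable ?M g"
    using g R set_integrable_iff_restrict_compact by blast
  have pp1: "p1 \<in> polys k" and pp2: "p2 \<in> polys k"
    using p1 p2 unfolding is_proj_def by auto
  define d where "d = (\<lambda>x. p1 x - p2 x)"
  have d: "d \<in> polys k"
    unfolding d_def using pp1 pp2 by (rule polys_diff)
  have bounded: "bounded_measurable ?M p" if "p \<in> polys k" for p
    using that R(1) by (intro bounded_measurable_restrict_compact continuous_on_polys)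
  have i1: "integrable ?M (\<lambda>x. g x - p1 x)" and i2: "integrable ?M (\<lambda>x. g x - p2 x)"
    using gi bounded_measurable_integrable[OF M bounded[OF pp1]]
      bounded_measurable_integrable[OF M bounded[OF pp2]] by auto
  have "l2_inner ?M (\<lambda>x. g x - p1 x) d = 0" "l2_inner ?M (\<lambda>x. g x - p2 x) d = 0"
    using p1 p2 d set_lebesgue_integral_restrict_compact[OF R(1)]
    unfolding is_proj_def l2_inner_def by metis+
  then have "l2_inner ?M d d = 0"
    using l2_inner_diff_left[OF i2 i1 bounded[OF d]] by (simp add: d_def)
  then have "AE x in ?M. d x = 0"
    using l2_inner_self_eq_0_AE[OF bounded[OF d] M] by blast
  then have "AE x in lborel. x \<in> R \<longrightarrow> d x = 0"
    using AE_restrict_space_iff[of R lborel] borel_compact[OF R(1)] by simp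
  then have "d y = 0" for y
    using polys_eq_0_if_AE_eq_0[OF d R(2)] by blast
  then show ?thesis
    unfolding d_def by auto
qed

lemma is_proj_proj:
  assumes R: "compact R" "interior R \<noteq> {}" and g: "set_integrable lborel R g"
  shows "is_proj k R g (proj k R g)"
proof -
  obtain p where p: "is_proj k R g p"
    using is_proj_exists[OF R(1) g] by blast
  have "is_proj k R g (THE p. is_proj k R g p)"
    by (rule theI[of _ p]) (use p is_proj_unique[OF R g] in auto)
  then show ?thesis
    unfolding proj_def is_proj_def .
qed

lemma proj_eqI:
  assumes "compact R" "interior R \<noteq> {}" "set_integrable lborel R g" "is_proj k R g p"
  shows "proj k R g = p"
  using is_proj_unique[OF assms(1-3) is_proj_proj[OF assms(1-3)] assms(4)] .

lemma proj_polys: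
  "compact R \<Longrightarrow> interior R \<noteq> {} \<Longrightarrow> set_integrable lborel R g \<Longrightarrow> proj k R g \<in> polys k"
  using is_proj_proj unfolding is_proj_def by blast

lemma proj_diff_polys:
  assumes R: "compact R" "interior R \<noteq> {}" and g: "set_integrable lborel R g" and P: "P \<in> polys k"
  shows "proj k R (\<lambda>y. g y - P y) = (\<lambda>y. proj k R g y - P y)"
proof (rule proj_eqI[OF R])
  show "set_integrable lborel R (\<lambda>y. g y - P y)"
    using g set_integrable_polys[OF P R(1)] by (rule set_integral_diff(1))
  show "is_proj k R (\<lambda>y. g y - P y) (\<lambda>y. proj k R g y - P y)"
    using is_proj_proj[OF R g] P unfolding is_proj_def by (auto intro: polys_diff)
qed

lemma proj_const:
  assumes "compact R" "interior R \<noteq> {}"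
  shows "proj k R (\<lambda>_. c) = (\<lambda>_. c)"
  using assms polys_const[of c k] set_integrable_polys[OF polys_const assms(1)]
  by (intro proj_eqI) (auto simp: is_proj_def)

section \<open>Dyadic subcubes\<close>

lemma cube_compact: "R \<in> cubes \<Longrightarrow> compact R"
  unfolding cubes_def by auto

lemma cube_sets: "R \<in> cubes \<Longrightarrow> R \<in> sets lborel"
  by (simp add: borel_compact cube_compact)

lemma One_vec_eq_1: "(One :: real ^ 'n::finite) = 1"
  by (metis Cart_1)

lemma cube_interior_nonempty:
  fixes R :: "(real ^ 'n::finite) set"
  assumes "R \<in> cubes"
  shows "interior R \<noteq> {}"
proof -
  obtain a h where R: "R = cbox a (a + h *\<^sub>R One)" "0 < h"
    using assms unfolding cubes_def by auto
  then have "\<forall>i. a $ i < (a + h *\<^sub>R One) $ i"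
    by (simp add: One_vec_eq_1)
  then have "box a (a + h *\<^sub>R One) \<noteq> {}"
    by (simp add: interval_ne_empty_cart)
  then show ?thesis
    using R by (simp add: interior_cbox)
qed

lemma set_integrable_cube: "loc_integrable f \<Longrightarrow> R \<in> cubes \<Longrightarrow> set_integrable lborel R f"
  unfolding loc_integrable_def using cube_compact by blast

text \<open>The index \<open>(l, m)\<close> stands for the dyadic subcube of generation \<open>l\<close> with lower corner
  \<open>a + 2\<^sup>-\<^sup>l h m\<close> of the cube \<open>[a, a + h]\<^sup>n\<close>.\<close>
type_synonym 'n dyadic = "nat \<times> ('n \<Rightarrow> nat)"

abbreviation dyadic_root :: "'n dyadic" where
  "dyadic_root \<equiv> (0, \<lambda>_. 0)"

definition descends :: "'n dyadic \<Rightarrow> 'n dyadic \<Rightarrow> bool" where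
  "descends \<tau> \<rho> \<longleftrightarrow> fst \<rho> \<le> fst \<tau> \<and> (\<forall>i. snd \<tau> i div 2 ^ (fst \<tau> - fst \<rho>) = snd \<rho> i)"

definition ancestor :: "'n dyadic \<Rightarrow> nat \<Rightarrow> 'n dyadic" where
  "ancestor \<tau> l = (l, \<lambda>i. snd \<tau> i div 2 ^ (fst \<tau> - l))"

lemma descends_refl: "descends \<tau> \<tau>"
  by (simp add: descends_def)

lemma descends_level: "descends \<tau> \<rho> \<Longrightarrow> fst \<rho> \<le> fst \<tau>"
  by (simp add: descends_def)

lemma descends_same_level: "descends \<tau> \<rho> \<Longrightarrow> fst \<tau> = fst \<rho> \<Longrightarrow> \<tau> = \<rho>"
  by (cases \<tau>, cases \<rho>) (auto simp: descends_def)

lemma descends_trans: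
  assumes "descends \<tau> \<rho>" "descends \<rho> \<sigma>"
  shows "descends \<tau> \<sigma>"
proof -
  have levels: "fst \<rho> \<le> fst \<tau>" "fst \<sigma> \<le> fst \<rho>"
    and d1: "\<And>i. snd \<tau> i div 2 ^ (fst \<tau> - fst \<rho>) = snd \<rho> i"
    and d2: "\<And>i. snd \<rho> i div 2 ^ (fst \<rho> - fst \<sigma>) = snd \<sigma> i"
    using assms unfolding descends_def by auto
  have "(2::nat) ^ (fst \<tau> - fst \<sigma>) = 2 ^ (fst \<tau> - fst \<rho>) * 2 ^ (fst \<rho> - fst \<sigma>)"
    using levels by (simp flip: power_add)
  then have "snd \<tau> i div 2 ^ (fst \<tau> - fst \<sigma>) = snd \<sigma> i" for i
    by (simp add: div_mult2_eq d1 d2)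
  then show ?thesis
    using levels unfolding descends_def by auto
qed

lemma descends_ancestor: "l \<le> fst \<tau> \<Longrightarrow> descends \<tau> (ancestor \<tau> l)"
  by (simp add: descends_def ancestor_def)

lemma ancestor_descends:
  assumes "descends \<tau> \<rho>" "fst \<rho> \<le> l" "l \<le> fst \<tau>"
  shows "descends (ancestor \<tau> l) \<rho>"
proof -
  have "(2::nat) ^ (fst \<tau> - fst \<rho>) = 2 ^ (fst \<tau> - l) * 2 ^ (l - fst \<rho>)"
    using assms by (simp flip: power_add)
  then have "snd \<tau> i div 2 ^ (fst \<tau> - l) div 2 ^ (l - fst \<rho>) = snd \<rho> i" for i
    using assms(1) by (simp add: descends_def div_mult2_eq[symmetric])
  then show ?thesis
    using assms unfolding descends_def ancestor_def by auto
qed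

lemma div_power2_interval_bounds:
  fixes M m d j :: nat and h :: real
  assumes "0 < h" "M div 2 ^ d = m"
  shows "h / 2 ^ j * real m \<le> h / 2 ^ (j + d) * real M"
    "h / 2 ^ (j + d) * (real M + 1) \<le> h / 2 ^ j * (real m + 1)"
proof -
  have M: "2 ^ d * m + M mod 2 ^ d = M" "M mod 2 ^ d < 2 ^ d"
    using mult_div_mod_eq[of "2 ^ d" M] assms(2) by simp_all
  have "2 ^ d * (m + 1) = 2 ^ d * m + (2::nat) ^ d"
    by (simp add: distrib_left)
  then have "real (2 ^ d * m) \<le> real M" "real (M + 1) \<le> real (2 ^ d * (m + 1))"
    unfolding of_nat_le_iff using M by linarith+
  then have lower: "2 ^ d * real m \<le> real M" and upper: "real M + 1 \<le> 2 ^ d * (real m + 1)"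
    by (simp_all add: algebra_simps)
  have "h / 2 ^ j * real m = h / 2 ^ (j + d) * (2 ^ d * real m)"
    by (simp add: power_add field_simps)
  also have "\<dots> \<le> h / 2 ^ (j + d) * real M"
    using lower assms(1) by (intro mult_left_mono) auto
  finally show "h / 2 ^ j * real m \<le> h / 2 ^ (j + d) * real M" .
  have "h / 2 ^ (j + d) * (real M + 1) \<le> h / 2 ^ (j + d) * (2 ^ d * (real m + 1))"
    using upper assms(1) by (intro mult_left_mono) auto
  also have "\<dots> = h / 2 ^ j * (real m + 1)"
    by (simp add: power_add field_simps)
  finally show "h / 2 ^ (j + d) * (real M + 1) \<le> h / 2 ^ j * (real m + 1)" .
qed

locale dyadic_grid =
  fixes a :: "real ^ 'n::finite" and h :: real
  assumes h_pos: "0 < h"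
begin

definition dcube :: "'n dyadic \<Rightarrow> (real ^ 'n) set" where
  "dcube \<tau> = cbox (a + (h / 2 ^ fst \<tau>) *\<^sub>R (\<chi> i. real (snd \<tau> i)))
                   (a + (h / 2 ^ fst \<tau>) *\<^sub>R (\<chi> i. real (snd \<tau> i) + 1))"

definition dvol :: "'n dyadic \<Rightarrow> real" where
  "dvol \<tau> = (h / 2 ^ fst \<tau>) ^ CARD('n)"

lemma mem_dcube: "x \<in> dcube \<tau> \<longleftrightarrow>
   (\<forall>i. a$i + h / 2 ^ fst \<tau> * real (snd \<tau> i) \<le> x$i \<and> x$i \<le> a$i + h / 2 ^ fst \<tau> * (real (snd \<tau> i) + 1))"
  by (simp add: dcube_def mem_box_cart)

lemma mem_interior_dcube: "x \<in> interior (dcube \<tau>) \<longleftrightarrow>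
   (\<forall>i. a$i + h / 2 ^ fst \<tau> * real (snd \<tau> i) < x$i \<and> x$i < a$i + h / 2 ^ fst \<tau> * (real (snd \<tau> i) + 1))"
  by (simp add: dcube_def interior_cbox mem_box_cart)

lemma dcube_in_cubes: "dcube \<tau> \<in> cubes"
proof -
  let ?a = "a + (h / 2 ^ fst \<tau>) *\<^sub>R (\<chi> i. real (snd \<tau> i))"
  have upper: "a + (h / 2 ^ fst \<tau>) *\<^sub>R (\<chi> i. real (snd \<tau> i) + 1) = ?a + (h / 2 ^ fst \<tau>) *\<^sub>R One"
    by (simp add: vec_eq_iff algebra_simps One_vec_eq_1 add_divide_distrib)
  have "0 < h / 2 ^ fst \<tau>"
    using h_pos by simp
  then show ?thesis
    unfolding cubes_def dcube_def upper by blast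
qed

lemma dcube_root: "dcube dyadic_root = cbox a (a + h *\<^sub>R One)"
proof -
  have "(\<chi> i. real 0) = (0 :: real ^ 'n)" "(\<chi> i. real 0 + 1) = (One :: real ^ 'n)"
    by (simp_all add: vec_eq_iff One_vec_eq_1)
  then show ?thesis
    by (simp add: dcube_def)
qed

lemma dcube_mono:
  assumes "descends \<tau> \<rho>"
  shows "dcube \<tau> \<subseteq> dcube \<rho>"
proof
  fix x
  assume x: "x \<in> dcube \<tau>"
  define d where "d = fst \<tau> - fst \<rho>"
  have level: "fst \<tau> = fst \<rho> + d"
    using assms unfolding d_def descends_def by auto
  show "x \<in> dcube \<rho>"
    unfolding mem_dcube
  proof
    fix i
    have "snd \<tau> i div 2 ^ d = snd \<rho> i"
      using assms unfolding descends_def d_def by auto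
    note bounds = div_power2_interval_bounds[OF h_pos this, of "fst \<rho>"]
    show "a $ i + h / 2 ^ fst \<rho> * real (snd \<rho> i) \<le> x $ i \<and>
        x $ i \<le> a $ i + h / 2 ^ fst \<rho> * (real (snd \<rho> i) + 1)"
      using x bounds unfolding mem_dcube level by (meson add_left_mono order_trans)
  qed
qed

lemma dcube_interiors_same_level:
  assumes "fst \<tau> = fst \<sigma>" "y \<in> interior (dcube \<tau>)" "y \<in> interior (dcube \<sigma>)"
  shows "\<tau> = \<sigma>"
proof -
  have "snd \<tau> i = snd \<sigma> i" for i
  proof -
    let ?s = "h / 2 ^ fst \<tau>"
    have s: "0 < ?s"
      using h_pos by simp
    have "a$i + ?s * real (snd \<tau> i) < y$i" "y$i < a$i + ?s * (real (snd \<tau> i) + 1)"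
      "a$i + ?s * real (snd \<sigma> i) < y$i" "y$i < a$i + ?s * (real (snd \<sigma> i) + 1)"
      using assms unfolding mem_interior_dcube by auto
    then have "?s * real (snd \<tau> i) < ?s * (real (snd \<sigma> i) + 1)"
      "?s * real (snd \<sigma> i) < ?s * (real (snd \<tau> i) + 1)"
      by linarith+
    then have "real (snd \<tau> i) < real (snd \<sigma> i) + 1" "real (snd \<sigma> i) < real (snd \<tau> i) + 1"
      using mult_less_cancel_left_pos[OF s] by blast+
    then show ?thesis
      by linarith
  qed
  then show ?thesis
    using assms(1) by (simp add: prod_eq_iff fun_eq_iff)
qed

lemma descends_if_interiors_meet:
  assumes "y \<in> interior (dcube \<tau>\<^sub>1)" "y \<in> interior (dcube \<tau>\<^sub>2)" "fst \<tau>\<^sub>1 \<le> fst \<tau>\<^sub>2"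
  shows "descends \<tau>\<^sub>2 \<tau>\<^sub>1"
proof -
  let ?p = "ancestor \<tau>\<^sub>2 (fst \<tau>\<^sub>1)"
  have "y \<in> interior (dcube ?p)"
    using assms(2) dcube_mono[OF descends_ancestor[OF assms(3)]] interior_mono by blast
  then have "?p = \<tau>\<^sub>1"
    using dcube_interiors_same_level[OF _ _ assms(1)] by (simp add: ancestor_def)
  then show ?thesis
    using descends_ancestor[OF assms(3)] by simp
qed

lemma dvol_pos: "0 < dvol \<tau>"
  using h_pos by (simp add: dvol_def)

lemma ennreal_inverse_dvol: "ennreal (1 / dvol \<tau>) * ennreal (dvol \<tau>) = 1"
  using dvol_pos[of \<tau>] by (simp flip: ennreal_mult)

lemma emeasure_dcube: "emeasure lborel (dcube \<tau>) = ennreal (dvol \<tau>)"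
proof -
  define l :: "real ^ 'n" where "l = a + (h / 2 ^ fst \<tau>) *\<^sub>R (\<chi> i. real (snd \<tau> i))"
  define u :: "real ^ 'n" where "u = a + (h / 2 ^ fst \<tau>) *\<^sub>R (\<chi> i. real (snd \<tau> i) + 1)"
  have du: "u $ i - l $ i = h / 2 ^ fst \<tau>" for i
    by (simp add: l_def u_def algebra_simps add_divide_distrib)
  then have "\<forall>i. l $ i \<le> u $ i"
    using h_pos by (metis diff_ge_0_iff_ge divide_nonneg_pos less_imp_le zero_less_numeral zero_less_power)
  then have "measure lborel (cbox l u) = (\<Prod>i\<in>UNIV. u $ i - l $ i)"
    by (simp add: content_cbox_cart interval_ne_empty_cart)
  also have "\<dots> = dvol \<tau>"
    by (simp add: du dvol_def)
  moreover have "emeasure lborel (cbox l u) = ennreal (measure lborel (cbox l u))"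
    using emeasure_compact_finite[of "cbox l u"] by (intro emeasure_eq_ennreal_measure) auto
  ultimately show ?thesis
    unfolding dcube_def l_def[symmetric] u_def[symmetric] by simp
qed

lemma dvol_ancestor: "fst \<tau> = Suc l \<Longrightarrow> dvol (ancestor \<tau> l) = 2 ^ CARD('n) * dvol \<tau>"
  by (simp add: dvol_def ancestor_def power_divide)

lemma dyadic_desc_root:
  assumes "R \<in> dyadic_desc (dcube dyadic_root)"
  shows "\<exists>\<tau>. descends \<tau> dyadic_root \<and> R = dcube \<tau>"
proof -
  obtain a' h' j m where R: "R = cbox (a' + (h' / 2 ^ j) *\<^sub>R (\<chi> i. real (m i))) (a' + (h' / 2 ^ j) *\<^sub>R (\<chi> i. real (m i) + 1))"
    and Q: "cbox a (a + h *\<^sub>R One) = cbox a' (a' + h' *\<^sub>R One)" and m: "\<forall>i. m i < (2::nat) ^ j"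
    using assms unfolding dyadic_desc_def dcube_root by auto
  have "cbox a (a + h *\<^sub>R One) \<noteq> {}"
    using h_pos by (auto simp: One_vec_eq_1 interval_ne_empty_cart)
  then have a': "a' = a" and upper: "a + h *\<^sub>R One = a' + h' *\<^sub>R One"
    using Q eq_cbox by blast+
  obtain i :: 'n where True
    by blast
  have "(a + h *\<^sub>R One) $ i = (a' + h' *\<^sub>R One) $ i"
    using upper by simp
  then have "h' = h"
    using a' by (simp add: One_vec_eq_1)
  then have "R = dcube (j, m)"
    using R a' by (simp add: dcube_def)
  moreover have "descends (j, m) dyadic_root"
    using m by (simp add: descends_def)
  ultimately show ?thesis
    by blast
qed

lemma nn_integral_dcube_interior:
  "(\<integral>\<^sup>+y. F y * indicator (dcube \<tau>) y \<partial>lborel) = (\<integral>\<^sup>+y. F y * indicator (interior (dcube \<tau>)) y \<partial>lborel)"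
proof (rule nn_integral_cong_AE)
  obtain l u where lu: "dcube \<tau> = cbox l u"
    unfolding dcube_def by blast
  show "AE y in lborel. F y * indicator (dcube \<tau>) y = F y * indicator (interior (dcube \<tau>)) y"
    using box_subset_cbox[of l u]
    by (intro AE_I'[OF null_sets_cbox_Diff_box]) (auto simp: lu interior_cbox indicator_def)
qed

end

section \<open>The stopping-time construction\<close>

text \<open>\<open>Av \<rho> \<tau>\<close> stands for the mean oscillation on the cube \<open>\<tau>\<close> about the projection attached
  to \<open>\<rho>\<close>.\<close>
definition stopping_cubes :: "('n dyadic \<Rightarrow> 'n dyadic \<Rightarrow> ennreal) \<Rightarrow> 'n dyadic \<Rightarrow> 'n dyadic set" where
  "stopping_cubes Av \<rho> = {\<tau>. descends \<tau> \<rho> \<and> 2 * Av \<rho> \<rho> < Av \<rho> \<tau> \<and>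
      (\<forall>\<sigma>. descends \<sigma> \<rho> \<and> descends \<tau> \<sigma> \<and> 2 * Av \<rho> \<rho> < Av \<rho> \<sigma> \<longrightarrow> \<sigma> = \<tau>)}"

primrec stopping_generation :: "('n dyadic \<Rightarrow> 'n dyadic \<Rightarrow> ennreal) \<Rightarrow> nat \<Rightarrow> 'n dyadic set" where
  "stopping_generation Av 0 = {dyadic_root}"
| "stopping_generation Av (Suc i) = (\<Union>\<rho>\<in>stopping_generation Av i. stopping_cubes Av \<rho>)"

lemma stopping_cubes_descends: "\<tau> \<in> stopping_cubes Av \<rho> \<Longrightarrow> descends \<tau> \<rho>"
  by (simp add: stopping_cubes_def)

lemma stopping_cubes_above:
  assumes "descends \<tau> \<rho>" "2 * Av \<rho> \<rho> < Av \<rho> \<tau>"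
  shows "\<exists>\<sigma>\<in>stopping_cubes Av \<rho>. descends \<tau> \<sigma>"
proof -
  define L where "L = {l. \<exists>\<sigma>. descends \<tau> \<sigma> \<and> descends \<sigma> \<rho> \<and> 2 * Av \<rho> \<rho> < Av \<rho> \<sigma> \<and> fst \<sigma> = l}"
  have "fst \<tau> \<in> L"
    unfolding L_def using assms descends_refl by blast
  then have "Least (\<lambda>l. l \<in> L) \<in> L"
    by (rule LeastI)
  then obtain \<sigma> where \<sigma>: "descends \<tau> \<sigma>" "descends \<sigma> \<rho>" "2 * Av \<rho> \<rho> < Av \<rho> \<sigma>"
    "fst \<sigma> = Least (\<lambda>l. l \<in> L)"
    unfolding L_def by blast
  have "\<sigma>' = \<sigma>" if "descends \<sigma>' \<rho>" "descends \<sigma> \<sigma>'" "2 * Av \<rho> \<rho> < Av \<rho> \<sigma>'" for \<sigma>'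
  proof -
    have "fst \<sigma>' \<in> L"
      unfolding L_def using that descends_trans[OF \<sigma>(1)] by blast
    then have "fst \<sigma> \<le> fst \<sigma>'"
      unfolding \<sigma>(4) by (rule Least_le)
    then show ?thesis
      using that descends_level[OF that(2)] descends_same_level[OF that(2)] by simp
  qed
  then have "\<sigma> \<in> stopping_cubes Av \<rho>"
    using \<sigma> unfolding stopping_cubes_def by blast
  then show ?thesis
    using \<sigma>(1) by blast
qed

text \<open>By maximality, the parent of a stopping cube is not selected.\<close>
lemma stopping_cubes_parent:
  assumes "\<tau> \<in> stopping_cubes Av \<rho>"
  shows "fst \<rho> < fst \<tau>" "descends (ancestor \<tau> (fst \<tau> - 1)) \<rho>"
    "Av \<rho> (ancestor \<tau> (fst \<tau> - 1)) \<le> 2 * Av \<rho> \<rho>"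
proof -
  have d: "descends \<tau> \<rho>" and bad: "2 * Av \<rho> \<rho> < Av \<rho> \<tau>"
    and max: "\<And>\<sigma>. descends \<sigma> \<rho> \<Longrightarrow> descends \<tau> \<sigma> \<Longrightarrow> 2 * Av \<rho> \<rho> < Av \<rho> \<sigma> \<Longrightarrow> \<sigma> = \<tau>"
    using assms unfolding stopping_cubes_def by auto
  have "Av \<rho> \<rho> \<le> 2 * Av \<rho> \<rho>"
    by (metis add_increasing2 mult_2 order_refl zero_le)
  then have "\<tau> \<noteq> \<rho>"
    using bad leD by blast
  then show lt: "fst \<rho> < fst \<tau>"
    using descends_same_level[OF d] descends_level[OF d] by fastforce
  show dp: "descends (ancestor \<tau> (fst \<tau> - 1)) \<rho>"
    using ancestor_descends[OF d] lt by simp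
  have "ancestor \<tau> (fst \<tau> - 1) \<noteq> \<tau>"
    using lt by (auto simp: ancestor_def prod_eq_iff)
  then show "Av \<rho> (ancestor \<tau> (fst \<tau> - 1)) \<le> 2 * Av \<rho> \<rho>"
    using max[OF dp descends_ancestor] by (meson diff_le_self not_less)
qed

lemma stopping_generation_cases:
  assumes "descends \<tau> dyadic_root"
  shows "(\<exists>\<rho>\<in>stopping_generation Av j. descends \<tau> \<rho>) \<or>
    (\<exists>j'<j. \<exists>\<rho>\<in>stopping_generation Av j'. descends \<tau> \<rho> \<and> Av \<rho> \<tau> \<le> 2 * Av \<rho> \<rho>)"
proof (induction j)
  case 0
  then show ?case
    using assms by simp
next
  case (Suc j)
  then show ?case
  proof
    assume "\<exists>\<rho>\<in>stopping_generation Av j. descends \<tau> \<rho>"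
    then obtain \<rho> where \<rho>: "\<rho> \<in> stopping_generation Av j" "descends \<tau> \<rho>"
      by blast
    show ?thesis
    proof (cases "2 * Av \<rho> \<rho> < Av \<rho> \<tau>")
      case True
      then obtain \<sigma> where "\<sigma> \<in> stopping_cubes Av \<rho>" "descends \<tau> \<sigma>"
        using stopping_cubes_above[OF \<rho>(2)] by blast
      then show ?thesis
        using \<rho>(1) by auto
    next
      case False
      then show ?thesis
        using \<rho> by (auto simp: not_less)
    qed
  qed (auto intro: less_SucI)
qed

lemma (in dyadic_grid) stopping_cubes_interiors_disjoint:
  assumes "\<tau>\<^sub>1 \<in> stopping_cubes Av \<rho>" "\<tau>\<^sub>2 \<in> stopping_cubes Av \<rho>"
    and "y \<in> interior (dcube \<tau>\<^sub>1)" "y \<in> interior (dcube \<tau>\<^sub>2)"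
  shows "\<tau>\<^sub>1 = \<tau>\<^sub>2"
proof -
  have "\<sigma>\<^sub>1 = \<sigma>\<^sub>2" if "\<sigma>\<^sub>1 \<in> stopping_cubes Av \<rho>" "\<sigma>\<^sub>2 \<in> stopping_cubes Av \<rho>"
    "y \<in> interior (dcube \<sigma>\<^sub>1)" "y \<in> interior (dcube \<sigma>\<^sub>2)" "fst \<sigma>\<^sub>1 \<le> fst \<sigma>\<^sub>2" for \<sigma>\<^sub>1 \<sigma>\<^sub>2
    using descends_if_interiors_meet[OF that(3-5)] that(1,2) unfolding stopping_cubes_def by blast
  then show ?thesis
    using assms by (metis nat_le_linear)
qed

definition norm_integral :: "(real ^ 'n::finite \<Rightarrow> complex) \<Rightarrow> (real ^ 'n) set \<Rightarrow> ennreal" where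
  "norm_integral g S = (\<integral>\<^sup>+y\<in>S. ennreal (norm (g y)) \<partial>lborel)"

lemma avg_eq_norm_integral: "avg R g = norm_integral g R / emeasure lborel R"
  unfolding avg_def norm_integral_def ..

lemma norm_integral_mono: "S \<subseteq> T \<Longrightarrow> norm_integral g S \<le> norm_integral g T"
  unfolding norm_integral_def by (intro nn_integral_mono) (auto simp: indicator_def)

lemma norm_integral_finite:
  assumes "set_integrable lborel R g"
  shows "norm_integral g R < \<infinity>"
proof -
  have "(\<integral>\<^sup>+x. ennreal (norm (indicator R x *\<^sub>R g x)) \<partial>lborel) < \<infinity>"
    using assms unfolding set_integrable_def by (simp add: integrable_iff_bounded)
  moreover have "(\<lambda>x. ennreal (norm (indicator R x *\<^sub>R g x))) = (\<lambda>x. ennreal (norm (g x)) * indicator R x)"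
    by (auto simp: indicator_def)
  ultimately show ?thesis
    unfolding norm_integral_def by simp
qed

lemma avg_add_bounded_le:
  assumes R: "R \<in> sets lborel" "emeasure lborel R \<noteq> 0" "emeasure lborel R \<noteq> \<infinity>"
    and g1: "g1 \<in> borel_measurable lborel"
    and bound: "\<And>y. y \<in> R \<Longrightarrow> ennreal (norm (g2 y)) \<le> c"
  shows "avg R (\<lambda>y. g1 y + g2 y) \<le> avg R g1 + c"
proof -
  have "norm_integral (\<lambda>y. g1 y + g2 y) R
      \<le> (\<integral>\<^sup>+y. ennreal (norm (g1 y)) * indicator R y + c * indicator R y \<partial>lborel)"
    unfolding norm_integral_def
  proof (intro nn_integral_mono)
    fix y
    show "ennreal (norm (g1 y + g2 y)) * indicator R y
        \<le> ennreal (norm (g1 y)) * indicator R y + c * indicator R y"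
    proof (cases "y \<in> R")
      case True
      have "ennreal (norm (g1 y + g2 y)) \<le> ennreal (norm (g1 y)) + ennreal (norm (g2 y))"
        by (simp add: norm_triangle_ineq flip: ennreal_plus)
      then show ?thesis
        using True bound[OF True] by (simp add: order_trans add_left_mono)
    qed simp
  qed
  also have "\<dots> = norm_integral g1 R + c * emeasure lborel R"
    using R g1 unfolding norm_integral_def
    by (subst nn_integral_add) (auto simp: nn_integral_cmult_indicator)
  finally have "avg R (\<lambda>y. g1 y + g2 y) \<le> (norm_integral g1 R + c * emeasure lborel R) / emeasure lborel R"
    unfolding avg_eq_norm_integral by (rule divide_right_mono_ennreal)
  also have "\<dots> = avg R g1 + c"
    using R by (simp add: avg_eq_norm_integral ennreal_mult_divide_eq add_divide_distrib_ennreal)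
  finally show ?thesis .
qed

context dyadic_grid
begin

lemma avg_dcube: "avg (dcube \<tau>) g = norm_integral g (dcube \<tau>) * ennreal (1 / dvol \<tau>)"
  using dvol_pos[of \<tau>]
  by (simp add: avg_eq_norm_integral emeasure_dcube divide_ennreal_def inverse_ennreal inverse_eq_divide)

lemma avg_dcube_le_ancestor:
  assumes "fst \<tau> = Suc l"
  shows "avg (dcube \<tau>) g \<le> 2 ^ CARD('n) * avg (dcube (ancestor \<tau> l)) g"
proof -
  let ?p = "ancestor \<tau> l"
  have "dcube \<tau> \<subseteq> dcube ?p"
    using dcube_mono[OF descends_ancestor[of l \<tau>]] assms by simp
  then have "avg (dcube \<tau>) g \<le> norm_integral g (dcube ?p) * ennreal (1 / dvol \<tau>)"
    unfolding avg_dcube by (intro mult_right_mono norm_integral_mono) auto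
  also have "1 / dvol \<tau> = 2 ^ CARD('n) * (1 / dvol ?p)"
    using dvol_ancestor[OF assms] dvol_pos[of \<tau>] by simp
  also have "ennreal (2 ^ CARD('n) * (1 / dvol ?p)) = ennreal (2 ^ CARD('n)) * ennreal (1 / dvol ?p)"
    using dvol_pos[of ?p] by (intro ennreal_mult) auto
  also have "ennreal (2 ^ CARD('n)) = 2 ^ CARD('n)"
    using ennreal_power[of 2 "CARD('n)"] by simp
  finally show ?thesis
    by (simp add: avg_dcube ac_simps)
qed

end

section \<open>Calderon-Zygmund decomposition of the oscillation\<close>

lemma nn_integral_count_space_le_single_support:
  fixes F :: "'i::countable \<Rightarrow> ennreal"
  assumes "\<And>i. F i \<le> c" "\<And>i j. F i \<noteq> 0 \<Longrightarrow> F j \<noteq> 0 \<Longrightarrow> i = j"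
  shows "(\<integral>\<^sup>+i. F i \<partial>count_space UNIV) \<le> c"
proof (cases "\<exists>i0. F i0 \<noteq> 0")
  case True
  then obtain i0 where "F i0 \<noteq> 0"
    by blast
  then have "(\<integral>\<^sup>+i. F i \<partial>count_space UNIV) = (\<Sum>i\<in>{i0}. F i)"
    using assms(2) by (intro nn_integral_count_space') auto
  then show ?thesis
    using assms(1) by simp
qed simp

lemma nn_integral_count_space_ge_term:
  fixes F :: "'i::countable \<Rightarrow> ennreal"
  shows "F i0 \<le> (\<integral>\<^sup>+i. F i \<partial>count_space UNIV)"
proof -
  have "F i0 = (\<integral>\<^sup>+i. F i * indicator {i0} i \<partial>count_space UNIV)"
    by simp
  also have "\<dots> \<le> (\<integral>\<^sup>+i. F i \<partial>count_space UNIV)"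
    by (intro nn_integral_mono) (auto simp: indicator_def)
  finally show ?thesis .
qed

text \<open>The interiors of the stopping cubes of \<open>\<rho>\<close> are disjoint subsets of the cube \<open>\<rho>\<close>.\<close>
lemma (in dyadic_grid) nn_integral_stopping_cubes_le:
  assumes [measurable]: "g \<in> borel_measurable lborel"
  shows "(\<integral>\<^sup>+\<tau>. norm_integral g (interior (dcube \<tau>)) * indicator (stopping_cubes Av \<rho>) \<tau> \<partial>count_space UNIV)
    \<le> norm_integral g (dcube \<rho>)"
proof -
  let ?X = "stopping_cubes Av \<rho>"
  have [measurable]: "interior (dcube \<tau>) \<in> sets borel" for \<tau>
    by (rule borel_open) simp
  have "(\<integral>\<^sup>+\<tau>. norm_integral g (interior (dcube \<tau>)) * indicator ?X \<tau> \<partial>count_space UNIV)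
      = (\<integral>\<^sup>+y. ennreal (norm (g y)) *
          (\<integral>\<^sup>+\<tau>. indicator (interior (dcube \<tau>)) y * indicator ?X \<tau> \<partial>count_space UNIV) \<partial>lborel)"
    unfolding norm_integral_def
    by (subst nn_integral_multc[symmetric], simp, subst nn_integral_count_space_nn_integral[symmetric])
      (auto simp: ac_simps nn_integral_cmult[symmetric] intro!: nn_integral_cong)
  also have "\<dots> \<le> (\<integral>\<^sup>+y. ennreal (norm (g y)) * indicator (dcube \<rho>) y \<partial>lborel)"
  proof (intro nn_integral_mono mult_left_mono nn_integral_count_space_le_single_support)
    fix y \<tau>
    show "indicator (interior (dcube \<tau>)) y * indicator ?X \<tau> \<le> (indicator (dcube \<rho>) y :: ennreal)"
      using dcube_mono[OF stopping_cubes_descends[of \<tau> Av \<rho>]] interior_subset[of "dcube \<tau>"]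
      by (auto simp: indicator_def)
  next
    fix y \<tau>\<^sub>1 \<tau>\<^sub>2
    assume "indicator (interior (dcube \<tau>\<^sub>1)) y * indicator ?X \<tau>\<^sub>1 \<noteq> (0::ennreal)"
      "indicator (interior (dcube \<tau>\<^sub>2)) y * indicator ?X \<tau>\<^sub>2 \<noteq> (0::ennreal)"
    then show "\<tau>\<^sub>1 = \<tau>\<^sub>2"
      by (intro stopping_cubes_interiors_disjoint[of \<tau>\<^sub>1 Av \<rho> \<tau>\<^sub>2 y]) (auto split: split_indicator_asm)
  qed auto
  finally show ?thesis
    unfolding norm_integral_def .
qed

locale cz_cube = dyadic_grid a h for a :: "real ^ 'n::finite" and h +
  fixes k :: nat and f :: "real ^ 'n \<Rightarrow> complex"
  assumes loc_integrable: "loc_integrable f"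
begin

definition dproj :: "'n dyadic \<Rightarrow> real ^ 'n \<Rightarrow> complex" where
  "dproj \<tau> = proj k (dcube \<tau>) f"

definition osc :: "'n dyadic \<Rightarrow> 'n dyadic \<Rightarrow> ennreal" where
  "osc \<rho> \<tau> = avg (dcube \<tau>) (\<lambda>y. f y - dproj \<rho> y)"

abbreviation generation :: "nat \<Rightarrow> 'n dyadic set" where
  "generation \<equiv> stopping_generation osc"

definition stopping_set :: "nat \<Rightarrow> (real ^ 'n) set" where
  "stopping_set i = (\<Union>\<tau>\<in>generation i. dcube \<tau>)"

definition stopping_volume :: "nat \<Rightarrow> ennreal" where
  "stopping_volume i = (\<integral>\<^sup>+\<tau>. ennreal (dvol \<tau>) * indicator (generation i) \<tau> \<partial>count_space UNIV)"

lemma dproj_polys: "dproj \<tau> \<in> polys k"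
  unfolding dproj_def using dcube_in_cubes
  by (intro proj_polys cube_compact cube_interior_nonempty set_integrable_cube loc_integrable)

lemma borel_measurable_f_minus_dproj: "(\<lambda>y. f y - dproj \<rho> y) \<in> borel_measurable lborel"
  using loc_integrable borel_measurable_polys[OF dproj_polys]
  unfolding loc_integrable_def by (intro borel_measurable_diff) auto

lemma set_integrable_f_minus_dproj: "R \<in> cubes \<Longrightarrow> set_integrable lborel R (\<lambda>y. f y - dproj \<rho> y)"
  by (intro set_integral_diff(1) set_integrable_cube[OF loc_integrable]
      set_integrable_polys[OF dproj_polys cube_compact])

lemma osc_le_sharp_max: "x \<in> dcube \<rho> \<Longrightarrow> osc \<rho> \<rho> \<le> sharp_max k f x"
  unfolding osc_def dproj_def sharp_max_def by (rule SUP_upper) (use dcube_in_cubes in auto)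

lemma norm_integral_eq_osc: "norm_integral (\<lambda>y. f y - dproj \<rho> y) (dcube \<tau>) = osc \<rho> \<tau> * ennreal (dvol \<tau>)"
  unfolding osc_def avg_dcube using ennreal_inverse_dvol[of \<tau>] by (simp add: mult.assoc)

lemma osc_finite: "osc \<rho> \<tau> \<noteq> top"
  using norm_integral_finite[OF set_integrable_f_minus_dproj[OF dcube_in_cubes[of \<tau>], of \<rho>]]
    norm_integral_eq_osc[of \<rho> \<tau>] dvol_pos[of \<tau>]
  by (auto simp: ennreal_mult_eq_top_iff)

lemma stopping_cube_norm_integral_ge:
  assumes "\<tau> \<in> stopping_cubes osc \<rho>"
  shows "2 * osc \<rho> \<rho> * ennreal (dvol \<tau>) \<le> norm_integral (\<lambda>y. f y - dproj \<rho> y) (interior (dcube \<tau>))"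
proof -
  have "2 * osc \<rho> \<rho> * ennreal (dvol \<tau>) \<le> osc \<rho> \<tau> * ennreal (dvol \<tau>)"
    using assms unfolding stopping_cubes_def by (auto intro: mult_right_mono)
  then show ?thesis
    using nn_integral_dcube_interior[of "\<lambda>y. ennreal (norm (f y - dproj \<rho> y))"]
    by (simp add: norm_integral_eq_osc[symmetric] norm_integral_def)
qed

lemma stopping_cubes_empty_if_osc_0:
  assumes "osc \<rho> \<rho> = 0"
  shows "stopping_cubes osc \<rho> = {}"
proof (rule ccontr)
  assume "stopping_cubes osc \<rho> \<noteq> {}"
  then obtain \<tau> where \<tau>: "\<tau> \<in> stopping_cubes osc \<rho>"
    by blast
  then have "0 < osc \<rho> \<tau>"
    using assms unfolding stopping_cubes_def by auto
  moreover have "osc \<rho> \<tau> * ennreal (dvol \<tau>) \<le> osc \<rho> \<rho> * ennreal (dvol \<rho>)"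
    unfolding norm_integral_eq_osc[symmetric]
    by (intro norm_integral_mono dcube_mono stopping_cubes_descends[OF \<tau>])
  ultimately show False
    using assms dvol_pos[of \<tau>] by simp
qed

text \<open>Each stopping cube carries more than twice the mean oscillation of its parent \<open>\<rho>\<close>, so
  together they cover at most half of \<open>\<rho>\<close>.\<close>
lemma stopping_cubes_volume_le:
  "2 * (\<integral>\<^sup>+\<tau>. ennreal (dvol \<tau>) * indicator (stopping_cubes osc \<rho>) \<tau> \<partial>count_space UNIV) \<le> ennreal (dvol \<rho>)"
  (is "2 * ?S \<le> _")
proof (cases "osc \<rho> \<rho> = 0")
  case True
  then show ?thesis
    by (simp add: stopping_cubes_empty_if_osc_0)
next
  case False
  let ?A = "osc \<rho> \<rho>"
  let ?X = "stopping_cubes osc \<rho>"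
  have "?A * (2 * ?S) = (\<integral>\<^sup>+\<tau>. (2 * ?A) * (ennreal (dvol \<tau>) * indicator ?X \<tau>) \<partial>count_space UNIV)"
    by (subst nn_integral_cmult) (auto simp: ac_simps)
  also have "\<dots> \<le> (\<integral>\<^sup>+\<tau>. norm_integral (\<lambda>y. f y - dproj \<rho> y) (interior (dcube \<tau>)) * indicator ?X \<tau> \<partial>count_space UNIV)"
    using stopping_cube_norm_integral_ge
    by (intro nn_integral_mono) (auto simp: indicator_def mult.assoc)
  also have "\<dots> \<le> ?A * ennreal (dvol \<rho>)"
    using nn_integral_stopping_cubes_le[OF borel_measurable_f_minus_dproj[of \<rho>], of osc \<rho>]
    by (simp add: norm_integral_eq_osc)
  finally show ?thesis
    using ennreal_mult_le_mult_iff[OF False osc_finite] by blast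
qed

lemma stopping_volume_Suc_le: "2 * stopping_volume (Suc i) \<le> stopping_volume i"
proof -
  let ?G = "generation i"
  let ?S = "stopping_cubes osc"
  define T where "T \<rho> = (\<integral>\<^sup>+\<tau>. ennreal (dvol \<tau>) * indicator (?S \<rho>) \<tau> \<partial>count_space UNIV)" for \<rho>
  have "stopping_volume (Suc i)
      \<le> (\<integral>\<^sup>+\<tau>. \<integral>\<^sup>+\<rho>. ennreal (dvol \<tau>) * indicator ?G \<rho> * indicator (?S \<rho>) \<tau> \<partial>count_space UNIV \<partial>count_space UNIV)"
    unfolding stopping_volume_def
  proof (intro nn_integral_mono)
    fix \<tau>
    show "ennreal (dvol \<tau>) * indicator (generation (Suc i)) \<tau>
        \<le> (\<integral>\<^sup>+\<rho>. ennreal (dvol \<tau>) * indicator ?G \<rho> * indicator (?S \<rho>) \<tau> \<partial>count_space UNIV)"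
    proof (cases "\<tau> \<in> generation (Suc i)")
      case True
      then obtain \<rho> where "\<rho> \<in> ?G" "\<tau> \<in> ?S \<rho>"
        by auto
      then show ?thesis
        using True nn_integral_count_space_ge_term[of "\<lambda>\<rho>. ennreal (dvol \<tau>) * indicator ?G \<rho> * indicator (?S \<rho>) \<tau>" \<rho>]
        by simp
    qed simp
  qed
  also have "\<dots> = (\<integral>\<^sup>+\<rho>. indicator ?G \<rho> * T \<rho> \<partial>count_space UNIV)"
    unfolding T_def by (subst nn_integral_count_space_nn_integral)
      (auto intro!: nn_integral_cong simp: nn_integral_cmult[symmetric] ac_simps)
  finally have "2 * stopping_volume (Suc i) \<le> 2 * (\<integral>\<^sup>+\<rho>. indicator ?G \<rho> * T \<rho> \<partial>count_space UNIV)"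
    by (rule mult_left_mono) simp
  also have "\<dots> = (\<integral>\<^sup>+\<rho>. indicator ?G \<rho> * (2 * T \<rho>) \<partial>count_space UNIV)"
    by (subst nn_integral_cmult[symmetric]) (auto simp: ac_simps)
  also have "\<dots> \<le> (\<integral>\<^sup>+\<rho>. indicator ?G \<rho> * ennreal (dvol \<rho>) \<partial>count_space UNIV)"
    unfolding T_def by (intro nn_integral_mono mult_left_mono stopping_cubes_volume_le) simp
  also have "\<dots> = stopping_volume i"
    unfolding stopping_volume_def by (simp add: ac_simps)
  finally show ?thesis .
qed

lemma stopping_volume_le: "stopping_volume i \<le> ennreal (h ^ CARD('n) * (1/2) ^ i)"
proof -
  have bound: "2 ^ i * stopping_volume i \<le> ennreal (h ^ CARD('n))"
  proof (induction i)
    case 0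
    then show ?case
      by (simp add: stopping_volume_def dvol_def)
  next
    case (Suc i)
    have "2 ^ Suc i * stopping_volume (Suc i) = 2 ^ i * (2 * stopping_volume (Suc i))"
      by (simp add: ac_simps)
    also have "\<dots> \<le> 2 ^ i * stopping_volume i"
      using stopping_volume_Suc_le by (rule mult_left_mono) simp
    finally show ?case
      using Suc.IH by simp
  qed
  have "ennreal ((1/2) ^ i) * ennreal (2 ^ i) = ennreal ((1/2) ^ i * 2 ^ i)"
    by (rule ennreal_mult[symmetric]) auto
  also have "(1/2::real) ^ i * 2 ^ i = 1"
    by (simp add: power_mult_distrib[symmetric])
  finally have "ennreal ((1/2) ^ i) * 2 ^ i = 1"
    using ennreal_power[of 2 i] by simp
  then have "stopping_volume i = ennreal ((1/2) ^ i) * (2 ^ i * stopping_volume i)"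
    by (simp add: mult.assoc[symmetric])
  also have "\<dots> \<le> ennreal ((1/2) ^ i) * ennreal (h ^ CARD('n))"
    using bound by (rule mult_left_mono) simp
  also have "\<dots> = ennreal (h ^ CARD('n) * (1/2) ^ i)"
    using h_pos by (subst ennreal_mult[symmetric]) (auto simp: mult.commute)
  finally show ?thesis .
qed

lemma stopping_set_0: "stopping_set 0 = dcube dyadic_root"
  by (simp add: stopping_set_def)

lemma stopping_set_sets [measurable]: "stopping_set i \<in> sets borel"
  unfolding stopping_set_def by (rule sets.countable_UN'') (auto simp: dcube_def)

lemma emeasure_stopping_set_le: "emeasure lborel (stopping_set i) \<le> ennreal (h ^ CARD('n) * (1/2) ^ i)"
proof -
  let ?G = "generation i"
  have [measurable]: "dcube \<tau> \<in> sets borel" for \<tau>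
    by (auto simp: dcube_def)
  have "emeasure lborel (stopping_set i) = (\<integral>\<^sup>+y. indicator (stopping_set i) y \<partial>lborel)"
    by simp
  also have "\<dots> \<le> (\<integral>\<^sup>+y. \<integral>\<^sup>+\<tau>. indicator ?G \<tau> * indicator (dcube \<tau>) y \<partial>count_space UNIV \<partial>lborel)"
  proof (intro nn_integral_mono)
    fix y
    show "indicator (stopping_set i) y \<le> (\<integral>\<^sup>+\<tau>. indicator ?G \<tau> * indicator (dcube \<tau>) y \<partial>count_space UNIV)"
    proof (cases "y \<in> stopping_set i")
      case True
      then obtain \<tau> where "\<tau> \<in> ?G" "y \<in> dcube \<tau>"
        unfolding stopping_set_def by auto
      then show ?thesis
        using True nn_integral_count_space_ge_term[of "\<lambda>\<tau>. indicator ?G \<tau> * indicator (dcube \<tau>) y" \<tau>]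
        by simp
    qed simp
  qed
  also have "\<dots> = (\<integral>\<^sup>+\<tau>. indicator ?G \<tau> * ennreal (dvol \<tau>) \<partial>count_space UNIV)"
    by (subst nn_integral_count_space_nn_integral)
      (auto intro!: nn_integral_cong simp: nn_integral_cmult_indicator emeasure_dcube)
  also have "\<dots> = stopping_volume i"
    unfolding stopping_volume_def by (simp add: ac_simps)
  finally show ?thesis
    using stopping_volume_le order_trans by blast
qed

end

section \<open>Pointwise control of the dyadic maximal function\<close>

context cz_cube
begin

definition ratio :: "real ^ 'n \<Rightarrow> ennreal" where
  "ratio x = dyadic_max (dcube dyadic_root) (\<lambda>y. f y - proj k (dcube dyadic_root) f y) x / sharp_max k f x"

end

locale cz_cube_bounded = cz_cube a h k f for a :: "real ^ 'n::finite" and h k f +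
  fixes \<gamma> :: real
  assumes proj_bound: "\<And>R (g :: real ^ 'n \<Rightarrow> complex) x. R \<in> cubes \<Longrightarrow> set_integrable lborel R g \<Longrightarrow> x \<in> R \<Longrightarrow>
      ennreal (norm (proj k R g x)) \<le> ennreal \<gamma> * avg R g"
begin

definition jump :: real where
  "jump = 2 * 2 ^ CARD('n) * \<gamma>"

definition level_bound :: "nat \<Rightarrow> real" where
  "level_bound i = 2 + real i * jump"

definition majorant :: "real \<Rightarrow> real ^ 'n \<Rightarrow> ennreal" where
  "majorant q x = (\<Sum>i. ennreal (level_bound i powr q) * indicator (stopping_set i) x)"

text \<open>Test the bound on the constant function \<open>1\<close>, which is its own projection.\<close>
lemma gamma_ge_1: "1 \<le> \<gamma>"
proof -
  let ?Q = "dcube dyadic_root"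
  have Q: "compact ?Q" "interior ?Q \<noteq> {}"
    using cube_compact[OF dcube_in_cubes] cube_interior_nonempty[OF dcube_in_cubes] by auto
  have "avg ?Q (\<lambda>_. 1::complex) = norm_integral (\<lambda>_. 1) ?Q * ennreal (1 / dvol dyadic_root)"
    by (rule avg_dcube)
  also have "norm_integral (\<lambda>_. 1::complex) ?Q = ennreal (dvol dyadic_root)"
    using cube_sets[OF dcube_in_cubes] by (simp add: norm_integral_def emeasure_dcube)
  finally have avg_1: "avg ?Q (\<lambda>_. 1::complex) = 1"
    using ennreal_inverse_dvol by (simp add: mult.commute)
  obtain x where "x \<in> ?Q"
    using Q(2) interior_subset by blast
  then have "ennreal (norm (proj k ?Q (\<lambda>_. 1) x)) \<le> ennreal \<gamma> * avg ?Q (\<lambda>_. 1::complex)"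
    by (intro proj_bound dcube_in_cubes set_integrable_polys[OF polys_const Q(1)])
  then have "ennreal 1 \<le> ennreal \<gamma>"
    using proj_const[OF Q] avg_1 by simp
  show ?thesis
  proof (rule ccontr)
    assume "\<not> 1 \<le> \<gamma>"
    then have "ennreal \<gamma> < ennreal 1"
      by (intro ennreal_lessI) auto
    then show False
      using \<open>ennreal 1 \<le> ennreal \<gamma>\<close> by simp
  qed
qed

lemma jump_nonneg: "0 \<le> jump"
  using gamma_ge_1 by (simp add: jump_def)

lemma ennreal_jump: "ennreal jump = 2 * 2 ^ CARD('n) * ennreal \<gamma>"
  using gamma_ge_1 ennreal_power[of 2 "CARD('n)"] by (simp add: jump_def ennreal_mult)

lemma level_bound_ge_2: "2 \<le> level_bound i"
  using jump_nonneg by (simp add: level_bound_def)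

lemma dproj_diff_le:
  assumes "y \<in> dcube \<tau>"
  shows "ennreal (norm (dproj \<tau> y - dproj \<rho> y)) \<le> ennreal \<gamma> * osc \<rho> \<tau>"
proof -
  have "proj k (dcube \<tau>) (\<lambda>y. f y - dproj \<rho> y) = (\<lambda>y. dproj \<tau> y - dproj \<rho> y)"
    unfolding dproj_def[of \<tau>] using dcube_in_cubes
    by (intro proj_diff_polys cube_compact cube_interior_nonempty set_integrable_cube loc_integrable dproj_polys)
  moreover have "ennreal (norm (proj k (dcube \<tau>) (\<lambda>y. f y - dproj \<rho> y) y))
      \<le> ennreal \<gamma> * avg (dcube \<tau>) (\<lambda>y. f y - dproj \<rho> y)"
    by (rule proj_bound) (use dcube_in_cubes set_integrable_f_minus_dproj assms in auto)
  ultimately show ?thesis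
    by (simp add: osc_def)
qed

text \<open>The parent of the stopping cube \<open>\<tau>\<close> is not selected and only \<open>2\<^sup>n\<close> times larger than \<open>\<tau>\<close>.\<close>
lemma dproj_stopping_cube_diff_le:
  assumes "\<tau> \<in> stopping_cubes osc \<rho>" "y \<in> dcube \<tau>" "x \<in> dcube \<rho>"
  shows "ennreal (norm (dproj \<tau> y - dproj \<rho> y)) \<le> ennreal jump * sharp_max k f x"
proof -
  note parent = stopping_cubes_parent[OF assms(1)]
  have "osc \<rho> \<tau> \<le> 2 ^ CARD('n) * osc \<rho> (ancestor \<tau> (fst \<tau> - 1))"
    unfolding osc_def using parent(1) by (intro avg_dcube_le_ancestor) simp
  also have "\<dots> \<le> 2 ^ CARD('n) * (2 * sharp_max k f x)"
  proof (rule mult_left_mono)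
    have "2 * osc \<rho> \<rho> \<le> 2 * sharp_max k f x"
      using osc_le_sharp_max[OF assms(3)] by (rule mult_left_mono) simp
    then show "osc \<rho> (ancestor \<tau> (fst \<tau> - 1)) \<le> 2 * sharp_max k f x"
      using parent(3) by (rule order_trans[rotated])
  qed simp
  finally have "ennreal \<gamma> * osc \<rho> \<tau> \<le> ennreal \<gamma> * (2 ^ CARD('n) * (2 * sharp_max k f x))"
    by (rule mult_left_mono) simp
  then show ?thesis
    using dproj_diff_le[OF assms(2), of \<rho>] by (simp add: ennreal_jump ac_simps)
qed

lemma dproj_generation_diff_le:
  "\<rho> \<in> generation j \<Longrightarrow> y \<in> dcube \<rho> \<Longrightarrow> x \<in> dcube \<rho> \<Longrightarrow>
    ennreal (norm (dproj \<rho> y - dproj dyadic_root y)) \<le> ennreal (real j * jump) * sharp_max k f x"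
proof (induction j arbitrary: \<rho>)
  case 0
  then show ?case
    by simp
next
  case (Suc j)
  then obtain \<rho>' where \<rho>': "\<rho>' \<in> generation j" "\<rho> \<in> stopping_cubes osc \<rho>'"
    by auto
  have "dcube \<rho> \<subseteq> dcube \<rho>'"
    using dcube_mono[OF stopping_cubes_descends[OF \<rho>'(2)]] .
  then have xy: "y \<in> dcube \<rho>'" "x \<in> dcube \<rho>'"
    using Suc.prems by auto
  have "norm (dproj \<rho> y - dproj dyadic_root y)
      \<le> norm (dproj \<rho> y - dproj \<rho>' y) + norm (dproj \<rho>' y - dproj dyadic_root y)"
    using norm_triangle_ineq[of "dproj \<rho> y - dproj \<rho>' y" "dproj \<rho>' y - dproj dyadic_root y"] by simp
  then have "ennreal (norm (dproj \<rho> y - dproj dyadic_root y))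
      \<le> ennreal (norm (dproj \<rho> y - dproj \<rho>' y)) + ennreal (norm (dproj \<rho>' y - dproj dyadic_root y))"
    by (simp flip: ennreal_plus)
  also have "\<dots> \<le> ennreal jump * sharp_max k f x + ennreal (real j * jump) * sharp_max k f x"
    using dproj_stopping_cube_diff_le[OF \<rho>'(2) Suc.prems(2) xy(2)] Suc.IH[OF \<rho>'(1) xy]
    by (rule add_mono)
  also have "\<dots> = (ennreal jump + ennreal (real j * jump)) * sharp_max k f x"
    by (simp add: distrib_right)
  also have "ennreal jump + ennreal (real j * jump) = ennreal (real (Suc j) * jump)"
    using jump_nonneg by (simp add: algebra_simps flip: ennreal_plus)
  finally show ?case .
qed

lemma avg_le_off_stopping_set:
  assumes x: "x \<notin> stopping_set (Suc i)" "x \<in> dcube \<tau>" and \<tau>: "descends \<tau> dyadic_root"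
  shows "avg (dcube \<tau>) (\<lambda>y. f y - dproj dyadic_root y) \<le> ennreal (level_bound i) * sharp_max k f x"
proof -
  obtain j \<rho> where j: "j < Suc i" "\<rho> \<in> generation j" "descends \<tau> \<rho>" "osc \<rho> \<tau> \<le> 2 * osc \<rho> \<rho>"
    using stopping_generation_cases[OF \<tau>, of osc "Suc i"] x(1) dcube_mono x(2)
    unfolding stopping_set_def by blast
  have "x \<in> dcube \<rho>"
    using dcube_mono[OF j(3)] x(2) by blast
  have "avg (dcube \<tau>) (\<lambda>y. f y - dproj dyadic_root y)
      = avg (dcube \<tau>) (\<lambda>y. (f y - dproj \<rho> y) + (dproj \<rho> y - dproj dyadic_root y))"
    by simp
  also have "\<dots> \<le> osc \<rho> \<tau> + ennreal (real j * jump) * sharp_max k f x"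
    unfolding osc_def using dvol_pos[of \<tau>] cube_sets[OF dcube_in_cubes[of \<tau>]]
      dproj_generation_diff_le[OF j(2) _ \<open>x \<in> dcube \<rho>\<close>] dcube_mono[OF j(3)]
    by (intro avg_add_bounded_le borel_measurable_f_minus_dproj) (auto simp: emeasure_dcube)
  also have "\<dots> \<le> 2 * sharp_max k f x + ennreal (real i * jump) * sharp_max k f x"
    using j(1) jump_nonneg order_trans[OF j(4) mult_left_mono[OF osc_le_sharp_max[OF \<open>x \<in> dcube \<rho>\<close>]]]
    by (intro add_mono mult_right_mono ennreal_leI mult_right_mono) auto
  also have "\<dots> = ennreal (level_bound i) * sharp_max k f x"
    using jump_nonneg by (simp add: level_bound_def distrib_right)
  finally show ?thesis .
qed

lemma ratio_le_off_stopping_set: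
  assumes "x \<notin> stopping_set (Suc i)"
  shows "ratio x \<le> ennreal (level_bound i)"
  unfolding ratio_def dyadic_max_def
proof (intro ennreal_divide_le_of_le_mult SUP_least, unfold mem_Collect_eq, elim conjE)
  fix R
  assume "R \<in> dyadic_desc (dcube dyadic_root)" "x \<in> R"
  then obtain \<tau> where "descends \<tau> dyadic_root" "R = dcube \<tau>" "x \<in> dcube \<tau>"
    using dyadic_desc_root by blast
  then show "avg R (\<lambda>y. f y - proj k (dcube dyadic_root) f y) \<le> ennreal (level_bound i) * sharp_max k f x"
    using avg_le_off_stopping_set[OF assms] by (simp add: dproj_def)
qed

text \<open>At the first generation \<open>i\<close> missing \<open>x\<close>, the ratio is bounded by \<open>level_bound i\<close>; if no
  generation misses \<open>x\<close>, every term of the majorant is at least \<open>1\<close>.\<close>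
lemma ratio_powr_le_majorant:
  assumes x: "x \<in> dcube dyadic_root" and q: "0 < q"
  shows "epowr (ratio x) q \<le> majorant q x"
proof (cases "\<exists>i. x \<notin> stopping_set (Suc i)")
  case True
  define i where "i = (LEAST i. x \<notin> stopping_set (Suc i))"
  have "x \<notin> stopping_set (Suc i)"
    unfolding i_def using True by (rule LeastI_ex)
  have "x \<in> stopping_set i"
  proof (cases i)
    case (Suc j)
    then show ?thesis
      using not_less_Least[of j "\<lambda>i. x \<notin> stopping_set (Suc i)"] unfolding i_def by auto
  qed (use x stopping_set_0 in simp)
  have "epowr (ratio x) q \<le> epowr (ennreal (level_bound i)) q"
    using \<open>x \<notin> stopping_set (Suc i)\<close> q by (intro epowr_mono ratio_le_off_stopping_set) auto
  also have "\<dots> = ennreal (level_bound i powr q) * indicator (stopping_set i) x"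
    using \<open>x \<in> stopping_set i\<close> level_bound_ge_2[of i] by (simp add: epowr_ennreal)
  also have "\<dots> \<le> majorant q x"
    unfolding majorant_def by (rule sum_le_suminf[OF summableI, of "{i}", simplified])
  finally show ?thesis .
next
  case False
  have "1 \<le> ennreal (level_bound i powr q) * indicator (stopping_set i) x" for i
  proof -
    have "x \<in> stopping_set i"
      using False x stopping_set_0 by (cases i) auto
    moreover have "1 \<le> level_bound i powr q"
      using q level_bound_ge_2[of i] by (intro ge_one_powr_ge_zero) auto
    ultimately show ?thesis
      by simp
  qed
  then show ?thesis
    unfolding majorant_def by (simp add: suminf_eq_top_if_ge_1)
qed

lemma borel_measurable_majorant [measurable]: "majorant q \<in> borel_measurable lborel"
  unfolding majorant_def by measurable

lemma nn_integral_majorant_le: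
  assumes q: "1 \<le> q"
  shows "(\<integral>\<^sup>+x. majorant q x \<partial>lborel) \<le> ennreal (h ^ CARD('n)) * ennreal ((48 * jump * q) powr q)"
proof -
  have "(\<integral>\<^sup>+x. majorant q x \<partial>lborel)
      = (\<Sum>i. ennreal (level_bound i powr q) * emeasure lborel (stopping_set i))"
    unfolding majorant_def by (subst nn_integral_suminf) (auto simp: nn_integral_cmult_indicator)
  also have "\<dots> \<le> (\<Sum>i. ennreal (h ^ CARD('n)) * ennreal (level_bound i powr q * (1/2) ^ i))"
  proof (intro suminf_le summableI)
    fix i
    have "ennreal (level_bound i powr q) * emeasure lborel (stopping_set i)
        \<le> ennreal (level_bound i powr q) * ennreal (h ^ CARD('n) * (1/2) ^ i)"
      by (intro mult_left_mono emeasure_stopping_set_le) simp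
    also have "\<dots> = ennreal (h ^ CARD('n)) * ennreal (level_bound i powr q * (1/2) ^ i)"
      using h_pos by (simp add: ennreal_mult[symmetric] ac_simps)
    finally show "ennreal (level_bound i powr q) * emeasure lborel (stopping_set i)
        \<le> ennreal (h ^ CARD('n)) * ennreal (level_bound i powr q * (1/2) ^ i)" .
  qed
  also have "\<dots> = ennreal (h ^ CARD('n)) * (\<Sum>i. ennreal (level_bound i powr q * (1/2) ^ i))"
    by (rule ennreal_suminf_cmult)
  also have "\<dots> \<le> ennreal (h ^ CARD('n)) * ennreal ((24 * (2 * jump) * q) powr q)"
  proof (intro mult_left_mono suminf_powr_linear_half_power_le[OF q])
    fix i
    have "1 \<le> (2::real) ^ CARD('n) * \<gamma>"
      using gamma_ge_1 mult_mono[of 1 "2 ^ CARD('n)" 1 \<gamma>] by simp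
    then have "2 \<le> 2 * jump"
      unfolding jump_def mult.assoc by linarith
    moreover have "0 \<le> real i * jump"
      using jump_nonneg by simp
    moreover have "2 * jump * real (Suc i) = 2 * jump + 2 * (real i * jump)"
      by (simp add: algebra_simps)
    ultimately show "level_bound i \<le> 2 * jump * real (Suc i)"
      unfolding level_bound_def by linarith
  qed (use jump_nonneg in \<open>auto simp: level_bound_def\<close>)
  finally show ?thesis
    by (simp add: mult.assoc)
qed

section \<open>The weighted estimate\<close>

lemma nn_integral_ratio_weight_le:
  assumes w: "weight w" and r: "1 < r" and p: "1 \<le> p"
  shows "(\<integral>\<^sup>+x\<in>dcube dyadic_root. epowr (ratio x) p * ennreal (w x) \<partial>lborel)
    \<le> epowr (\<integral>\<^sup>+x. majorant (p * (r / (r - 1))) x \<partial>lborel) ((r - 1) / r)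
      * epowr (\<integral>\<^sup>+x\<in>dcube dyadic_root. ennreal (w x powr r) \<partial>lborel) (1 / r)"
proof -
  let ?Q = "dcube dyadic_root"
  define q where "q = p * (r / (r - 1))"
  define \<alpha> where "\<alpha> = (r - 1) / r"
  have q: "0 < q" and \<alpha>: "0 < \<alpha>" and q\<alpha>: "q * \<alpha> = p"
    using r p by (auto simp: q_def \<alpha>_def)
  have [measurable]: "w \<in> borel_measurable lborel" "?Q \<in> sets borel" and w0: "\<And>x. 0 \<le> w x"
    using w dcube_in_cubes[of dyadic_root] cube_sets unfolding weight_def by auto
  have "(\<integral>\<^sup>+x\<in>?Q. epowr (ratio x) p * ennreal (w x) \<partial>lborel)
      \<le> (\<integral>\<^sup>+x. epowr (majorant q x * indicator ?Q x) \<alpha> * ennreal (w x * indicator ?Q x) \<partial>lborel)"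
  proof (intro nn_integral_mono)
    fix x
    show "epowr (ratio x) p * ennreal (w x) * indicator ?Q x
        \<le> epowr (majorant q x * indicator ?Q x) \<alpha> * ennreal (w x * indicator ?Q x)"
    proof (cases "x \<in> ?Q")
      case True
      have "epowr (ratio x) p = epowr (epowr (ratio x) q) \<alpha>"
        using q q\<alpha> by (simp add: epowr_epowr)
      also have "\<dots> \<le> epowr (majorant q x) \<alpha>"
        using ratio_powr_le_majorant[OF True q] \<alpha> by (intro epowr_mono) auto
      finally show ?thesis
        using True by (simp add: mult_right_mono)
    qed simp
  qed
  also have "\<dots> \<le> epowr (\<integral>\<^sup>+x. majorant q x * indicator ?Q x \<partial>lborel) \<alpha>
      * epowr (\<integral>\<^sup>+x. ennreal ((w x * indicator ?Q x) powr (1 / (1 / r))) \<partial>lborel) (1 / r)"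
    by (rule nn_integral_Holder) (use r w0 in \<open>auto simp: \<alpha>_def field_simps\<close>)
  also have "\<dots> \<le> epowr (\<integral>\<^sup>+x. majorant q x \<partial>lborel) \<alpha>
      * epowr (\<integral>\<^sup>+x\<in>?Q. ennreal (w x powr r) \<partial>lborel) (1 / r)"
    using \<alpha> r by (intro mult_mono epowr_mono nn_integral_mono order_refl)
      (auto simp: indicator_def mult_le_one)
  finally show ?thesis
    by (simp add: q_def \<alpha>_def)
qed

lemma weighted_estimate:
  assumes w: "weight w" and r: "1 < r" and p: "1 \<le> p"
  shows "epowr (inverse (w_r r w (dcube dyadic_root)) *
      (\<integral>\<^sup>+x\<in>dcube dyadic_root. epowr (ratio x) p * ennreal (w x) \<partial>lborel)) (1 / p)
    \<le> ennreal (96 * 2 ^ CARD('n) * (r / (r - 1)) * \<gamma> * p)"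
proof -
  define q where "q = p * (r / (r - 1))"
  define T where "T = 48 * jump * q"
  have "1 * r \<le> p * r"
    using p r by (intro mult_right_mono) auto
  then have "r - 1 \<le> p * r"
    by linarith
  then have q: "1 \<le> q"
    using r by (simp add: q_def field_simps)
  have T: "0 \<le> T"
    using q jump_nonneg by (simp add: T_def)
  have Q: "emeasure lborel (dcube dyadic_root) = ennreal (h ^ CARD('n))"
    by (simp add: emeasure_dcube dvol_def)
  have "epowr (\<integral>\<^sup>+x. majorant q x \<partial>lborel) ((r - 1) / r)
      \<le> epowr (ennreal (h ^ CARD('n) * T powr q)) ((r - 1) / r)"
    using nn_integral_majorant_le[OF q] h_pos r
    by (intro epowr_mono) (auto simp: T_def ennreal_mult)
  then have "(\<integral>\<^sup>+x\<in>dcube dyadic_root. epowr (ratio x) p * ennreal (w x) \<partial>lborel)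
      \<le> epowr (ennreal (h ^ CARD('n) * T powr q)) ((r - 1) / r)
        * epowr (\<integral>\<^sup>+x\<in>dcube dyadic_root. ennreal (w x powr r) \<partial>lborel) (1 / r)"
    using nn_integral_ratio_weight_le[OF w r p] unfolding q_def[symmetric]
    by (meson mult_right_mono order_trans zero_le)
  then have "inverse (w_r r w (dcube dyadic_root)) *
      (\<integral>\<^sup>+x\<in>dcube dyadic_root. epowr (ratio x) p * ennreal (w x) \<partial>lborel) \<le> ennreal ((T powr q) powr ((r - 1) / r))"
    unfolding w_r_def Q using h_pos r T
    by (intro inverse_normalised_mult_le) (auto simp: field_simps)
  also have "(T powr q) powr ((r - 1) / r) = T powr p"
    using r by (simp add: powr_powr q_def)
  finally have "epowr (inverse (w_r r w (dcube dyadic_root)) *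
      (\<integral>\<^sup>+x\<in>dcube dyadic_root. epowr (ratio x) p * ennreal (w x) \<partial>lborel)) (1 / p) \<le> epowr (ennreal (T powr p)) (1 / p)"
    using p by (intro epowr_mono) auto
  also have "\<dots> = ennreal T"
    using T p by (simp add: epowr_ennreal powr_powr)
  also have "T = 96 * 2 ^ CARD('n) * (r / (r - 1)) * \<gamma> * p"
    by (simp add: T_def q_def jump_def algebra_simps)
  finally show ?thesis .
qed

end

theorem theorem7p1:
  "\<exists>c::real. c > 0 \<and>
    (\<forall>(k::nat) (\<gamma>::real).
      (\<forall>R (g :: real ^ 'n \<Rightarrow> complex) x. R \<in> cubes \<longrightarrow> set_integrable lborel R g \<longrightarrow> x \<in> R \<longrightarrow>
          ennreal (norm (proj k R g x)) \<le> ennreal \<gamma> * avg R g) \<longrightarrow>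
      (\<forall>(w :: real ^ 'n \<Rightarrow> real) (f :: real ^ 'n \<Rightarrow> complex) Q (r::real) (p::real).
         weight w \<longrightarrow> loc_integrable f \<longrightarrow> Q \<in> cubes \<longrightarrow> 1 < r \<longrightarrow> 1 \<le> p \<longrightarrow>
         epowr (inverse (w_r r w Q) *
                 (\<integral>\<^sup>+ x\<in>Q. epowr (dyadic_max Q (\<lambda>y. f y - proj k Q f y) x / sharp_max k f x) p
                              * ennreal (w x) \<partial>lborel)) (1 / p)
           \<le> ennreal (c * (r / (r - 1)) * \<gamma> * p)))"
proof (intro exI[of _ "96 * 2 ^ CARD('n)"] conjI allI impI)
  fix k :: nat and \<gamma> :: real and w :: "real ^ 'n \<Rightarrow> real" and f :: "real ^ 'n \<Rightarrow> complex"
    and Q :: "(real ^ 'n) set" and r p :: real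
  assume bound: "\<forall>R (g :: real ^ 'n \<Rightarrow> complex) x. R \<in> cubes \<longrightarrow> set_integrable lborel R g \<longrightarrow>
      x \<in> R \<longrightarrow> ennreal (norm (proj k R g x)) \<le> ennreal \<gamma> * avg R g"
    and "weight w" "loc_integrable f" "Q \<in> cubes" "1 < r" "1 \<le> p"
  then obtain a h where "0 < h" and Q: "Q = cbox a (a + h *\<^sub>R One)"
    unfolding cubes_def by blast
  interpret cz_cube_bounded a h k f \<gamma>
  proof
    show "0 < h" "loc_integrable f"
      by fact+
    fix R and g :: "real ^ 'n \<Rightarrow> complex" and x
    assume "R \<in> cubes" "set_integrable lborel R g" "x \<in> R"
    then show "ennreal (norm (proj k R g x)) \<le> ennreal \<gamma> * avg R g"
      using bound by blast
  qed
  show "epowr (inverse (w_r r w Q) *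
          (\<integral>\<^sup>+ x\<in>Q. epowr (dyadic_max Q (\<lambda>y. f y - proj k Q f y) x / sharp_max k f x) p
                      * ennreal (w x) \<partial>lborel)) (1 / p)
        \<le> ennreal (96 * 2 ^ CARD('n) * (r / (r - 1)) * \<gamma> * p)"
    using weighted_estimate[OF \<open>weight w\<close> \<open>1 < r\<close> \<open>1 \<le> p\<close>] by (simp add: Q dcube_root ratio_def)
qed simp

end
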